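(* Let $N=2$ and let $F$ be a marginal distribution on $[0,1]$ as described in the context, with density $f$ on $(0,1)$ and point mass $\Pr(1)$ at $1$. Suppose the robust-version regularity conditions hold: $x^2 f(x)$ is non-decreasing on $(0,1)$ and $\Pr(1)\ge \int_{(0,1)} x^2 f(x)\,dx$. Then the Second Price Auction with Uniformly Distributed Reserves $(q^*,t^* )$ and the Adversarial Correlation Structure $\pi^*$ form a Nash equilibrium (saddle point) of the zero-sum game between the auctioneer, who chooses a DSIC and EPIR mechanism, and Nature, who chooses $\pi\in\Pi(F)$; that is, $\pi^*\in\Pi(F)$ and $$U((q^*,t^* ),\pi)\ \ge\ U((q^*,t^* ),\pi^* )\ \ge\ U((q,t),\pi^* )$$ for every $\pi\in\Pi(F)$ and every DSIC and EPIR mechanism $(q,t)$. Moreover, the revenue guarantee of $(q^*,t^* )$, i.e. $\inf_{\pi\in\Pi(F)}U((q^*,t^* ),\pi)$, equals $E[X^2]$ where $X\sim F$.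
   Context: A single indivisible good is sold to two risk-neutral bidders with private values $v_1,v_2\in[0,1]$. Both bidders' values have the same marginal cumulative distribution function $F$ on $[0,1]$ whose support is $[0,1]$; $F$ may have point masses at $0$ and at $1$ and is absolutely continuous on $(0,1)$ with density $f$; $\Pr(1)$ denotes the probability mass of $F$ at $1$ (if $F$ has a point mass at $0$, write $f(0)$ for $\Pr(0)$). $\Pi(F)$ is the set of Borel probability measures on $[0,1]^2$ both of whose one-dimensional marginals equal $F$. A (direct) mechanism is a pair $(q,t)$ with $q:[0,1]^2\to[0,1]^2$, $q_1(v)+q_2(v)\le 1$, and $t:[0,1]^2\to\mathbb{R}^2$. It is DSIC if $v_iq_i(v)-t_i(v)\ge v_iq_i(v_i',v_{-i})-t_i(v_i',v_{-i})$ for all $i,v,v_i'$, and EPIR if $v_iq_i(v)-t_i(v)\ge 0$ for all $i,v$. The expected revenue of $(q,t)$ under $\pi$ is $U((q,t),\pi)=\int_{[0,1]^2}(t_1(v)+t_2(v))\,d\pi(v)$. Second Price Auction with Uniformly Distributed Reserves $(q^*,t^* )$: if $v_1>v_2$, then $q_1^*=v_1$, $q_2^*=0$, $t_1^*=\frac{v_1^2+v_2^2}{2}$, $t_2^*=0$; symmetrically if $v_2>v_1$; if $v_1=v_2=v$, then $q_1^*=q_2^*=\frac v2$ and $t_1^*=t_2^*=\frac{v^2}{2}$. Adversarial Correlation Structure $\pi^*$: a symmetric distribution on $[0,1]^2$ which places all the marginal weight of $F$ at $0$ on the profile $(0,0)$ (weight $f(0)$ there), places no weight on profiles where exactly one value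 is $0$, has density $\pi^*(v_1,v_2)=\pi^*(v_2,v_1)=\frac{1}{v_1^2}\Big(v_2f(v_2)-\frac{\int_0^{v_2}s^2f(s)\,ds}{v_2^2}\Big)$ (w.r.t. two-dimensional Lebesgue measure) for $0<v_2\le v_1<1$, has one-dimensional density $v_2f(v_2)-\frac{\int_0^{v_2}s^2f(s)\,ds}{v_2^2}$ (w.r.t. $dv_2$) on the segment $\{1\}\times(0,1)$ and symmetrically on $(0,1)\times\{1\}$, and has a point mass $\Pr(1)-\int_{(0,1)}s^2f(s)\,ds$ at $(1,1)$. *)

theory Defs
  imports "HOL-Probability.Probability"
begin

text \<open>Profiles v = (v1, v2) :: real \<times> real. A mechanism is a pair (q, t) of functions
  real \<times> real \<Rightarrow> real \<times> real; the first/second component is bidder 1/2.\<close>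

definition feasible :: "(real \<times> real \<Rightarrow> real \<times> real) \<Rightarrow> bool" where
  "feasible q \<longleftrightarrow> (\<forall>v1\<in>{0..1}. \<forall>v2\<in>{0..1}.
      0 \<le> fst (q (v1, v2)) \<and> 0 \<le> snd (q (v1, v2)) \<and> fst (q (v1, v2)) + snd (q (v1, v2)) \<le> 1)"

definition DSIC :: "(real \<times> real \<Rightarrow> real \<times> real) \<Rightarrow> (real \<times> real \<Rightarrow> real \<times> real) \<Rightarrow> bool" where
  "DSIC q t \<longleftrightarrow> (\<forall>v1\<in>{0..1}. \<forall>v2\<in>{0..1}. \<forall>w\<in>{0..1}.
      v1 * fst (q (v1, v2)) - fst (t (v1, v2)) \<ge> v1 * fst (q (w, v2)) - fst (t (w, v2)) \<and>
      v2 * snd (q (v1, v2)) - snd (t (v1, v2)) \<ge> v2 * snd (q (v1, w)) - snd (t (v1, w)))"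

definition EPIR :: "(real \<times> real \<Rightarrow> real \<times> real) \<Rightarrow> (real \<times> real \<Rightarrow> real \<times> real) \<Rightarrow> bool" where
  "EPIR q t \<longleftrightarrow> (\<forall>v1\<in>{0..1}. \<forall>v2\<in>{0..1}.
      v1 * fst (q (v1, v2)) - fst (t (v1, v2)) \<ge> 0 \<and>
      v2 * snd (q (v1, v2)) - snd (t (v1, v2)) \<ge> 0)"

definition DSIC_EPIR_mechanism ::
  "(real \<times> real \<Rightarrow> real \<times> real) \<Rightarrow> (real \<times> real \<Rightarrow> real \<times> real) \<Rightarrow> bool" where
  "DSIC_EPIR_mechanism q t \<longleftrightarrow> feasible q \<and> DSIC q t \<and> EPIR q t"

definition revenue :: "(real \<times> real \<Rightarrow> real \<times> real) \<Rightarrow> (real \<times> real) measure \<Rightarrow> real" where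
  "revenue t \<pi> = (\<integral>v. fst (t v) + snd (t v) \<partial>\<pi>)"

definition PiF :: "real measure \<Rightarrow> (real \<times> real) measure set" where
  "PiF F = {\<pi>. prob_space \<pi> \<and> sets \<pi> = sets (borel :: (real \<times> real) measure) \<and>
               distr \<pi> borel fst = F \<and> distr \<pi> borel snd = F}"

definition qstar :: "real \<times> real \<Rightarrow> real \<times> real" where
  "qstar v = (let v1 = fst v; v2 = snd v in
     if v1 > v2 then (v1, 0) else if v2 > v1 then (0, v2) else (v1 / 2, v1 / 2))"

definition tstar :: "real \<times> real \<Rightarrow> real \<times> real" where
  "tstar v = (let v1 = fst v; v2 = snd v in
     if v1 > v2 then ((v1^2 + v2^2) / 2, 0)
     else if v2 > v1 then (0, (v1^2 + v2^2) / 2)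
     else (v1^2 / 2, v1^2 / 2))"

definition gstar :: "(real \<Rightarrow> real) \<Rightarrow> real \<Rightarrow> real" where
  "gstar f v = v * f v - (LINT s:{0<..<v}|lborel. s^2 * f s) / v^2"

definition pistar_dens :: "(real \<Rightarrow> real) \<Rightarrow> real \<times> real \<Rightarrow> real" where
  "pistar_dens f v = (let v1 = fst v; v2 = snd v in
     if 0 < v2 \<and> v2 \<le> v1 \<and> v1 < 1 then gstar f v2 / v1^2
     else if 0 < v1 \<and> v1 < v2 \<and> v2 < 1 then gstar f v1 / v2^2
     else 0)"

definition pistar :: "real measure \<Rightarrow> (real \<Rightarrow> real) \<Rightarrow> (real \<times> real) measure" where
  "pistar F f = measure_of UNIV (sets (borel :: (real \<times> real) measure))
     (\<lambda>A. ennreal (measure F {0}) * indicator A (0, 0)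
        + (\<integral>\<^sup>+ v. indicator A v * ennreal (pistar_dens f v) \<partial>lborel)
        + (\<integral>\<^sup>+ y. indicator A (1, y) * indicator {0<..<1} y * ennreal (gstar f y) \<partial>lborel)
        + (\<integral>\<^sup>+ x. indicator A (x, 1) * indicator {0<..<1} x * ennreal (gstar f x) \<partial>lborel)
        + ennreal (measure F {1} - (LINT s:{0<..<1}|lborel. s^2 * f s)) * indicator A (1, 1))"

end

theory Submission
  imports Defs
begin

(*
  Under any coupling the second price auction with uniformly distributed reserves earns
  (v1^2 + v2^2) / 2, so its expected revenue is E[X^2] whatever the correlation: Nature cannot
  push it lower, and in particular not at pi*.

  Conversely, fix a DSIC and EPIR mechanism and a value y of bidder 2.  Bidder 1 then faces a
  one-dimensional schedule (Q, H) whose utility U x = x Q x - H x dominates the integral of Q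
  over [0, x].  Along the column of y, the density h of pi* satisfies the hazard inequality
  s h(s) <= int_s^1 h + g(y), where g(y) is the atom of pi* at (1, y); this is exactly where the
  monotonicity of x^2 f x is used.  Together with the envelope bound it shows that the column
  yields bidder 1 at most g(y) Q(1, y).  Bidder 2 is handled by symmetry of pi*, and feasibility
  q1 + q2 <= 1 on the edges x = 1 and y = 1 adds the two bounds up to Pr(1) + int s^2 f = E[X^2].
  Payments need not be measurable, so they are first dominated by measurable right limits.
*)

section \<open>Measure-theoretic preliminaries\<close>

definition add_measure :: "'a measure \<Rightarrow> 'a measure \<Rightarrow> 'a measure" where
  "add_measure M N = measure_of (space M) (sets M) (\<lambda>A. emeasure M A + emeasure N A)"

lemma sets_add_measure[simp]: "sets (add_measure M N) = sets M"
  unfolding add_measure_def by (simp add: sets.sigma_sets_eq)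

lemma space_add_measure[simp]: "space (add_measure M N) = space M"
  unfolding add_measure_def by (simp add: sets.space_closed)

lemma emeasure_add_measure:
  assumes N: "sets N = sets M" and A: "A \<in> sets M"
  shows "emeasure (add_measure M N) A = emeasure M A + emeasure N A"
  unfolding add_measure_def
proof (rule emeasure_measure_of_sigma[OF sets.sigma_algebra_axioms _ _ A])
  show "positive (sets M) (\<lambda>A. emeasure M A + emeasure N A)"
    by (simp add: positive_def)
  show "countably_additive (sets M) (\<lambda>A. emeasure M A + emeasure N A)"
    unfolding countably_additive_def
  proof (intro allI impI)
    fix B :: "nat \<Rightarrow> _" assume B: "range B \<subseteq> sets M" "disjoint_family B"
    have B': "range B \<subseteq> sets N" using B N by simp
    have "(\<Sum>i. emeasure M (B i) + emeasure N (B i)) = (\<Sum>i. emeasure M (B i)) + (\<Sum>i. emeasure N (B i))"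
      by (rule suminf_add[symmetric]) auto
    also have "\<dots> = emeasure M (\<Union> (range B)) + emeasure N (\<Union> (range B))"
      using suminf_emeasure[OF B(1,2)] suminf_emeasure[OF B' B(2)] by simp
    finally show "(\<Sum>i. emeasure M (B i) + emeasure N (B i)) = emeasure M (\<Union> (range B)) + emeasure N (\<Union> (range B))" .
  qed
qed

lemma nn_integral_add_measure:
  assumes N: "sets N = sets M" and f: "f \<in> borel_measurable M"
  shows "(\<integral>\<^sup>+x. f x \<partial>add_measure M N) = (\<integral>\<^sup>+x. f x \<partial>M) + (\<integral>\<^sup>+x. f x \<partial>N)"
  using f
proof induction
  case (cong f g)
  have sp: "space N = space M" using N by (rule sets_eq_imp_space_eq)
  have "(\<integral>\<^sup>+x. f x \<partial>add_measure M N) = (\<integral>\<^sup>+x. g x \<partial>add_measure M N)"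
    by (rule nn_integral_cong) (use cong in auto)
  moreover have "(\<integral>\<^sup>+x. f x \<partial>M) = (\<integral>\<^sup>+x. g x \<partial>M)"
    by (rule nn_integral_cong) (use cong in auto)
  moreover have "(\<integral>\<^sup>+x. f x \<partial>N) = (\<integral>\<^sup>+x. g x \<partial>N)"
    by (rule nn_integral_cong) (use cong sp in auto)
  ultimately show ?case using cong by simp
next
  case (set A)
  then show ?case using N by (simp add: emeasure_add_measure)
next
  case (mult u c)
  then have "u \<in> borel_measurable N" "u \<in> borel_measurable (add_measure M N)"
    using N by (simp_all cong: measurable_cong_sets)
  with mult show ?case
    by (simp add: nn_integral_cmult distrib_left)
next
  case (add u v)
  then have "u \<in> borel_measurable N" "v \<in> borel_measurable N"
    "u \<in> borel_measurable (add_measure M N)" "v \<in> borel_measurable (add_measure M N)"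
    using N by (simp_all cong: measurable_cong_sets)
  with add show ?case
    by (simp add: nn_integral_add algebra_simps)
next
  case (seq U)
  have mN: "\<And>i. U i \<in> borel_measurable N" and mS: "\<And>i. U i \<in> borel_measurable (add_measure M N)"
    using seq N by (simp_all cong: measurable_cong_sets)
  have "(\<integral>\<^sup>+x. (SUP i. U i) x \<partial>add_measure M N) = (SUP i. \<integral>\<^sup>+x. U i x \<partial>add_measure M N)"
    using nn_integral_monotone_convergence_SUP[OF \<open>incseq U\<close> mS] by (simp add: image_comp)
  also have "\<dots> = (SUP i. (\<integral>\<^sup>+x. U i x \<partial>M) + (\<integral>\<^sup>+x. U i x \<partial>N))"
    using seq by simp
  also have "\<dots> = (SUP i. \<integral>\<^sup>+x. U i x \<partial>M) + (SUP i. \<integral>\<^sup>+x. U i x \<partial>N)"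
    by (rule ennreal_SUP_add) (auto intro!: incseq_nn_integral \<open>incseq U\<close>)
  also have "\<dots> = (\<integral>\<^sup>+x. (SUP i. U i) x \<partial>M) + (\<integral>\<^sup>+x. (SUP i. U i) x \<partial>N)"
    using nn_integral_monotone_convergence_SUP[OF \<open>incseq U\<close> seq(1)]
      nn_integral_monotone_convergence_SUP[OF \<open>incseq U\<close> mN] by (simp add: image_comp)
  finally show ?case .
qed

lemma nn_integral_lborel_interval_endpoints:
  fixes a b :: real
  shows "(\<integral>\<^sup>+ x. h x * indicator {a<..<b} x \<partial>lborel) = (\<integral>\<^sup>+ x. h x * indicator {a..b} x \<partial>lborel)"
    and "(\<integral>\<^sup>+ x. h x * indicator {a..<b} x \<partial>lborel) = (\<integral>\<^sup>+ x. h x * indicator {a..b} x \<partial>lborel)"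
    and "(\<integral>\<^sup>+ x. h x * indicator {a<..b} x \<partial>lborel) = (\<integral>\<^sup>+ x. h x * indicator {a..b} x \<partial>lborel)"
proof -
  have "AE x in lborel. x \<noteq> a" "AE x in lborel. x \<noteq> b" by (rule AE_lborel_singleton)+
  then have ae: "AE x in lborel. x \<noteq> a \<and> x \<noteq> b" by eventually_elim simp
  show "(\<integral>\<^sup>+ x. h x * indicator {a<..<b} x \<partial>lborel) = (\<integral>\<^sup>+ x. h x * indicator {a..b} x \<partial>lborel)"
    by (rule nn_integral_cong_AE, rule eventually_mono[OF ae]) (auto simp: indicator_def)
  show "(\<integral>\<^sup>+ x. h x * indicator {a..<b} x \<partial>lborel) = (\<integral>\<^sup>+ x. h x * indicator {a..b} x \<partial>lborel)"
    by (rule nn_integral_cong_AE, rule eventually_mono[OF ae]) (auto simp: indicator_def)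
  show "(\<integral>\<^sup>+ x. h x * indicator {a<..b} x \<partial>lborel) = (\<integral>\<^sup>+ x. h x * indicator {a..b} x \<partial>lborel)"
    by (rule nn_integral_cong_AE, rule eventually_mono[OF ae]) (auto simp: indicator_def)
qed

lemma nn_integral_inverse_square:
  fixes a b :: real
  assumes "0 < a" "a \<le> b"
  shows "(\<integral>\<^sup>+ x. ennreal (1 / x^2) * indicator {a..b} x \<partial>lborel) = ennreal (1 / a - 1 / b)"
proof -
  have "(\<integral>\<^sup>+ x. ennreal (1 / x^2) * indicator {a..b} x \<partial>lborel) = (\<lambda>x. - 1 / x) b - (\<lambda>x. - 1 / x) a"
  proof (rule nn_integral_FTC_Icc)
    fix x assume "x \<in> {a..b}"
    then have "x \<noteq> 0" using assms by auto
    then show "((\<lambda>x. - 1 / x) has_real_derivative 1 / x^2) (at x)"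
      by (auto intro!: derivative_eq_intros simp: power2_eq_square field_simps)
  qed (use assms in auto)
  then show ?thesis by simp
qed

lemma clamp01_eq: "clamp 0 1 (x::real) = max 0 (min 1 x)"
  unfolding clamp_def Basis_real_def by (auto simp: max_def min_def)

lemma clamp01_in: "clamp 0 1 (x::real) \<in> {0..1}"
  by (simp add: clamp01_eq)

lemma mono_clamp01: "mono (clamp (0::real) 1)"
  by (auto simp: clamp01_eq mono_def)

lemma borel_measurable_clamp01[measurable]: "clamp (0::real) 1 \<in> borel_measurable borel"
  unfolding clamp01_eq[abs_def] by measurable

lemma measurable_indicator_Ico[measurable (raw)]:
  fixes f g :: "'a \<Rightarrow> real"
  assumes [measurable]: "f \<in> borel_measurable M" "g \<in> borel_measurable M"
  shows "(\<lambda>x. indicator {f x..<c} (g x) :: ennreal) \<in> borel_measurable M"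
proof -
  have "(\<lambda>x. indicator {f x..<c} (g x) :: ennreal) = (\<lambda>x. if f x \<le> g x \<and> g x < c then 1 else 0)"
    by (auto simp: indicator_def)
  also have "\<dots> \<in> borel_measurable M" by measurable
  finally show ?thesis .
qed

lemma measurable_indicator_Ioo[measurable (raw)]:
  fixes f g :: "'a \<Rightarrow> real"
  assumes [measurable]: "f \<in> borel_measurable M" "g \<in> borel_measurable M"
  shows "(\<lambda>x. indicator {c<..<f x} (g x) :: ennreal) \<in> borel_measurable M"
proof -
  have "(\<lambda>x. indicator {c<..<f x} (g x) :: ennreal) = (\<lambda>x. if c < g x \<and> g x < f x then 1 else 0)"
    by (auto simp: indicator_def)
  also have "\<dots> \<in> borel_measurable M" by measurable
  finally show ?thesis .
qed

lemma nn_integral_lborel2_fst: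
  fixes h :: "real \<times> real \<Rightarrow> ennreal"
  assumes "h \<in> borel_measurable (lborel \<Otimes>\<^sub>M lborel)"
  shows "(\<integral>\<^sup>+ v. h v \<partial>lborel) = (\<integral>\<^sup>+ x. (\<integral>\<^sup>+ y. h (x, y) \<partial>lborel) \<partial>lborel)"
  using lborel.nn_integral_fst[OF assms] by (simp add: lborel_prod)

lemma nn_integral_lborel2_snd:
  fixes h :: "real \<times> real \<Rightarrow> ennreal"
  assumes "h \<in> borel_measurable (lborel \<Otimes>\<^sub>M lborel)"
  shows "(\<integral>\<^sup>+ v. h v \<partial>lborel) = (\<integral>\<^sup>+ y. (\<integral>\<^sup>+ x. h (x, y) \<partial>lborel) \<partial>lborel)"
  using lborel_pair.nn_integral_snd[OF assms] by (simp add: lborel_prod)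

lemma borel_measurable_nn_integral_lborel2_fst:
  fixes h :: "real \<times> real \<Rightarrow> ennreal"
  assumes "h \<in> borel_measurable (lborel \<Otimes>\<^sub>M lborel)"
  shows "(\<lambda>x. \<integral>\<^sup>+ y. h (x, y) \<partial>lborel) \<in> borel_measurable borel"
proof -
  have "(\<lambda>(x, y). h (x, y)) \<in> borel_measurable (borel \<Otimes>\<^sub>M lborel)"
    using assms by (simp add: case_prod_beta)
  then show ?thesis by (rule lborel.borel_measurable_nn_integral)
qed

lemma measurable_Pair_real[measurable]:
  "(\<lambda>y::real. (c::real, y)) \<in> measurable borel borel" "(\<lambda>x::real. (x, c::real)) \<in> measurable borel borel"
  "fst \<in> measurable (borel :: (real \<times> real) measure) borel" "snd \<in> measurable (borel :: (real \<times> real) measure) borel"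
  by (simp_all add: borel_prod[symmetric])

lemma borel_measurable_nn_integral_lborel2_snd:
  fixes h :: "real \<times> real \<Rightarrow> ennreal"
  assumes "h \<in> borel_measurable (lborel \<Otimes>\<^sub>M lborel)"
  shows "(\<lambda>y. \<integral>\<^sup>+ x. h (x, y) \<partial>lborel) \<in> borel_measurable borel"
proof -
  have "(\<lambda>(y, x). h (x, y)) \<in> borel_measurable (borel \<Otimes>\<^sub>M lborel)"
    using measurable_pair_swap[OF assms] by (simp add: case_prod_beta)
  then show ?thesis by (rule lborel.borel_measurable_nn_integral)
qed

lemma measurable_swap_real: "prod.swap \<in> measurable (borel :: (real \<times> real) measure) borel"
  using measurable_pair_swap'[of "borel :: real measure" "borel :: real measure"]
  by (simp add: borel_prod prod.swap_def[abs_def] case_prod_beta)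

section \<open>Incentive compatible schedules of a single bidder\<close>

definition ic_ir_schedule :: "(real \<Rightarrow> real) \<Rightarrow> (real \<Rightarrow> real) \<Rightarrow> bool" where
  "ic_ir_schedule Q H \<longleftrightarrow> (\<forall>x\<in>{0..1}. \<forall>w\<in>{0..1}. x * Q x - H x \<ge> x * Q w - H w) \<and>
     (\<forall>x\<in>{0..1}. x * Q x - H x \<ge> 0 \<and> 0 \<le> Q x \<and> Q x \<le> 1)"

lemma ic_ir_scheduleD:
  assumes "ic_ir_schedule Q H" "x \<in> {0..1}" "w \<in> {0..1}"
  shows "x * Q x - H x \<ge> x * Q w - H w" "x * Q x - H x \<ge> 0" "0 \<le> Q x" "Q x \<le> 1"
  using assms unfolding ic_ir_schedule_def by auto

lemma ic_ir_schedule_alloc_mono: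
  assumes d: "ic_ir_schedule Q H" and "w \<in> {0..1}" "x \<in> {0..1}" "w \<le> x"
  shows "Q w \<le> Q x"
proof (cases "w = x")
  case False
  have "x * Q x - H x \<ge> x * Q w - H w" "w * Q w - H w \<ge> w * Q x - H x"
    using ic_ir_scheduleD(1)[OF d] assms by auto
  then have "(x - w) * (Q x - Q w) \<ge> 0" by (simp add: algebra_simps)
  moreover have "x - w > 0" using False assms by simp
  ultimately show ?thesis by (simp add: zero_le_mult_iff)
qed simp

lemma ic_ir_schedule_payment_mono:
  assumes d: "ic_ir_schedule Q H" and "w \<in> {0..1}" "x \<in> {0..1}" "w \<le> x"
  shows "H w \<le> H x"
proof -
  have "w * Q w - H w \<ge> w * Q x - H x" using ic_ir_scheduleD(1)[OF d] assms by auto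
  moreover have "w * (Q x - Q w) \<ge> 0"
    using ic_ir_schedule_alloc_mono[OF assms] assms by simp
  ultimately show ?thesis by (simp add: algebra_simps)
qed

lemma ic_ir_schedule_payment_le:
  assumes d: "ic_ir_schedule Q H" and x: "x \<in> {0..1}"
  shows "H x \<le> Q x" "H x \<le> 1"
proof -
  have "x * Q x - H x \<ge> 0" "0 \<le> Q x" "Q x \<le> 1" using ic_ir_scheduleD[OF d x x] by auto
  moreover have "x * Q x \<le> Q x" using x \<open>0 \<le> Q x\<close> by (simp add: mult_left_le_one_le)
  ultimately show "H x \<le> Q x" "H x \<le> 1" by auto
qed

lemma ic_ir_schedule_clamp:
  "ic_ir_schedule Q H \<Longrightarrow> ic_ir_schedule (\<lambda>x. Q (clamp 0 1 x)) (\<lambda>x. H (clamp 0 1 x))"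
  unfolding ic_ir_schedule_def by simp

lemma ic_ir_schedule_measurable:
  assumes d: "ic_ir_schedule Q H"
  shows "(\<lambda>x. Q (clamp 0 1 x)) \<in> borel_measurable borel" "(\<lambda>x. H (clamp 0 1 x)) \<in> borel_measurable borel"
proof -
  have "mono (\<lambda>x. Q (clamp 0 1 x))" "mono (\<lambda>x. H (clamp 0 1 x))"
    using ic_ir_schedule_alloc_mono[OF d] ic_ir_schedule_payment_mono[OF d] clamp01_in mono_clamp01
    by (auto simp: mono_def)
  then show "(\<lambda>x. Q (clamp 0 1 x)) \<in> borel_measurable borel" "(\<lambda>x. H (clamp 0 1 x)) \<in> borel_measurable borel"
    by (auto intro: borel_measurable_mono)
qed

lemma nn_integral_alloc_step:
  assumes d: "ic_ir_schedule Q H" and Qm[measurable]: "Q \<in> borel_measurable borel"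
    and "0 \<le> z" "z \<le> z'" "z' \<le> 1"
  shows "(\<integral>\<^sup>+ s. ennreal (Q s) * indicator {0..z'} s \<partial>lborel)
    \<le> (\<integral>\<^sup>+ s. ennreal (Q s) * indicator {0..z} s \<partial>lborel) + ennreal ((z' - z) * Q z')"
proof -
  have "(\<integral>\<^sup>+ s. ennreal (Q s) * indicator {0..z'} s \<partial>lborel)
      = (\<integral>\<^sup>+ s. ennreal (Q s) * indicator {0..z} s + ennreal (Q s) * indicator {z<..z'} s \<partial>lborel)"
    by (rule nn_integral_cong) (use assms in \<open>auto simp: indicator_def\<close>)
  also have "\<dots> = (\<integral>\<^sup>+ s. ennreal (Q s) * indicator {0..z} s \<partial>lborel)
      + (\<integral>\<^sup>+ s. ennreal (Q s) * indicator {z<..z'} s \<partial>lborel)"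
    by (rule nn_integral_add) auto
  also have "(\<integral>\<^sup>+ s. ennreal (Q s) * indicator {z<..z'} s \<partial>lborel)
      \<le> (\<integral>\<^sup>+ s. ennreal (Q z') * indicator {z<..z'} s \<partial>lborel)"
    using ic_ir_schedule_alloc_mono[OF d, of _ z'] assms
    by (intro nn_integral_mono) (auto simp: indicator_def intro!: ennreal_leI)
  also have "\<dots> = ennreal (Q z') * ennreal (z' - z)"
    using assms by (simp add: nn_integral_cmult_indicator)
  also have "\<dots> = ennreal ((z' - z) * Q z')"
    using assms ic_ir_scheduleD(3)[OF d, of z' z'] by (simp add: ennreal_mult' mult.commute)
  finally show ?thesis by (simp add: add_mono)
qed

lemma nn_integral_alloc_le_utility_plus:
  assumes d: "ic_ir_schedule Q H" and Qm[measurable]: "Q \<in> borel_measurable borel"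
    and x: "x \<in> {0..1}" and n: "0 < n"
  shows "(\<integral>\<^sup>+ s. ennreal (Q s) * indicator {0..x} s \<partial>lborel) \<le> ennreal (x * Q x - H x + 1 / real n)"
proof -
  define U where "U z = z * Q z - H z" for z
  define \<Phi> where "\<Phi> z = (\<integral>\<^sup>+ s. ennreal (Q s) * indicator {0..z} s \<partial>lborel)" for z
  define \<delta> where "\<delta> = x / real n"
  define s where "s k = real k * \<delta>" for k :: nat
  have \<delta>0: "\<delta> \<ge> 0" using x by (simp add: \<delta>_def)
  have s_in: "s k \<in> {0..1}" if "k \<le> n" for k
  proof -
    have "real k / real n \<le> 1" using that n by simp
    then have "x * (real k / real n) \<le> 1" using x mult_le_one[of x "real k / real n"] by simp
    then show ?thesis using x unfolding s_def \<delta>_def by (simp add: mult.commute)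
  qed
  have Qb: "0 \<le> Q z" "Q z \<le> 1" "0 \<le> U z" if "z \<in> {0..1}" for z
    using ic_ir_scheduleD[OF d that that] unfolding U_def by auto
  \<comment> \<open>Telescoping: the supporting lines of the convex utility U have slope Q.\<close>
  have claim: "\<Phi> (s k) + ennreal (U 0 + \<delta> * Q 0) \<le> ennreal (U (s k) + \<delta> * Q (s k))" if "k \<le> n" for k
    using that
  proof (induction k)
    case 0
    then show ?case by (simp add: s_def \<Phi>_def)
  next
    case (Suc k)
    have k: "s k \<in> {0..1}" "s (Suc k) \<in> {0..1}" using s_in Suc by auto
    have sS: "s (Suc k) = s k + \<delta>" unfolding s_def by (simp add: algebra_simps)
    have "\<Phi> (s (Suc k)) + ennreal (U 0 + \<delta> * Q 0)
        \<le> (\<Phi> (s k) + ennreal (U 0 + \<delta> * Q 0)) + ennreal (\<delta> * Q (s (Suc k)))"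
      using nn_integral_alloc_step[OF d Qm, of "s k" "s (Suc k)"] k sS \<delta>0
      unfolding \<Phi>_def by (auto simp: algebra_simps intro: add_mono)
    also have "\<dots> \<le> ennreal (U (s k) + \<delta> * Q (s k)) + ennreal (\<delta> * Q (s (Suc k)))"
      using Suc by (auto intro: add_mono)
    also have "\<dots> = ennreal (U (s k) + \<delta> * Q (s k) + \<delta> * Q (s (Suc k)))"
      using Qb[OF k(1)] Qb[OF k(2)] \<delta>0 by (subst ennreal_plus) auto
    also have "\<dots> \<le> ennreal (U (s (Suc k)) + \<delta> * Q (s (Suc k)))"
      using ic_ir_scheduleD(1)[OF d k(2) k(1)] sS unfolding U_def
      by (intro ennreal_leI) (simp add: algebra_simps)
    finally show ?case .
  qed
  have "s n = x" using n unfolding s_def \<delta>_def by simp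
  then have "\<Phi> x \<le> ennreal (U x + \<delta> * Q x)"
    using claim[of n] by (metis add_increasing2 le_iff_add nle_le zero_le)
  also have "\<dots> \<le> ennreal (U x + 1 / real n)"
  proof (rule ennreal_leI)
    have "\<delta> * Q x \<le> \<delta>" using Qb[OF x] \<delta>0 by (simp add: mult_left_le)
    also have "\<delta> \<le> 1 / real n" unfolding \<delta>_def using x n by (simp add: divide_right_mono)
    finally show "U x + \<delta> * Q x \<le> U x + 1 / real n" by simp
  qed
  finally show ?thesis by (simp add: \<Phi>_def U_def)
qed

lemma nn_integral_alloc_le_utility:
  assumes d: "ic_ir_schedule Q H" and Qm[measurable]: "Q \<in> borel_measurable borel" and x: "x \<in> {0..1}"
  shows "(\<integral>\<^sup>+ s. ennreal (Q s) * indicator {0..x} s \<partial>lborel) \<le> ennreal (x * Q x - H x)"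
proof (rule ennreal_le_epsilon)
  fix e :: real assume e: "0 < e"
  obtain n :: nat where n: "1 / e < real n" using reals_Archimedean2 by blast
  then have "0 < n" using e by (cases n) (auto simp: field_simps)
  with n e have "1 / real n < e" by (simp add: field_simps)
  have "(\<integral>\<^sup>+ s. ennreal (Q s) * indicator {0..x} s \<partial>lborel) \<le> ennreal (x * Q x - H x + 1 / real n)"
    by (rule nn_integral_alloc_le_utility_plus[OF d Qm x \<open>0 < n\<close>])
  also have "\<dots> \<le> ennreal (x * Q x - H x + e)"
    using \<open>1 / real n < e\<close> by (intro ennreal_leI) simp
  also have "\<dots> = ennreal (x * Q x - H x) + ennreal e"
    using ic_ir_scheduleD(2)[OF d x x] e by (simp add: ennreal_plus)
  finally show "(\<integral>\<^sup>+ s. ennreal (Q s) * indicator {0..x} s \<partial>lborel) \<le> ennreal (x * Q x - H x) + ennreal e" .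
qed

lemma nn_integral_value_alloc_le_utility:
  assumes d: "ic_ir_schedule Q H" and Qm[measurable]: "Q \<in> borel_measurable borel"
    and hm[measurable]: "h \<in> borel_measurable borel" and hpos: "\<And>x. 0 \<le> h x" and a: "0 \<le> a"
    and cond: "\<And>s. s \<in> {0<..<1} \<Longrightarrow>
      ennreal (s * h s) \<le> (\<integral>\<^sup>+ x. ennreal (h x) * indicator {s..<1} x \<partial>lborel) + ennreal a"
  shows "(\<integral>\<^sup>+ x. ennreal (h x) * ennreal (x * Q x) * indicator {0<..<1} x \<partial>lborel)
    \<le> (\<integral>\<^sup>+ x. ennreal (h x) * ennreal (x * Q x - H x) * indicator {0<..<1} x \<partial>lborel)
      + ennreal a * ennreal (Q 1 - H 1)"
proof -
  define U where "U x = x * Q x - H x" for x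
  define R where "R s = (\<integral>\<^sup>+ x. ennreal (h x) * indicator {s..<1} x \<partial>lborel)" for s
  define K where "K s x = ennreal (Q s) * indicator {0<..<1} s * (ennreal (h x) * indicator {s..<1} x)" for s x
  have Qb: "0 \<le> Q s" if "s \<in> {0<..<1}" for s using ic_ir_scheduleD(3)[OF d, of s s] that by auto
  have "(\<integral>\<^sup>+ x. ennreal (h x) * ennreal (x * Q x) * indicator {0<..<1} x \<partial>lborel)
      \<le> (\<integral>\<^sup>+ s. ennreal (Q s) * indicator {0<..<1} s * (R s + ennreal a) \<partial>lborel)"
  proof (rule nn_integral_mono)
    fix s :: real
    show "ennreal (h s) * ennreal (s * Q s) * indicator {0<..<1} s
       \<le> ennreal (Q s) * indicator {0<..<1} s * (R s + ennreal a)"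
    proof (cases "s \<in> {0<..<1}")
      case True
      have "ennreal (h s) * ennreal (s * Q s) = ennreal (Q s) * ennreal (s * h s)"
        using Qb[OF True] True hpos[of s] by (simp add: ennreal_mult'[symmetric] mult_ac)
      also have "\<dots> \<le> ennreal (Q s) * (R s + ennreal a)"
        unfolding R_def by (rule mult_left_mono[OF cond[OF True]]) simp
      finally show ?thesis using True by simp
    qed simp
  qed
  also have "\<dots> = (\<integral>\<^sup>+ s. (\<integral>\<^sup>+ x. K s x \<partial>lborel) + ennreal a * (ennreal (Q s) * indicator {0<..<1} s) \<partial>lborel)"
  proof (rule nn_integral_cong)
    fix s :: real
    have eq: "(\<integral>\<^sup>+ x. K s x \<partial>lborel) = ennreal (Q s) * indicator {0<..<1} s * R s"
      unfolding K_def R_def by (rule nn_integral_cmult) measurable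
    show "ennreal (Q s) * indicator {0<..<1} s * (R s + ennreal a)
        = (\<integral>\<^sup>+ x. K s x \<partial>lborel) + ennreal a * (ennreal (Q s) * indicator {0<..<1} s)"
      unfolding eq by (simp add: algebra_simps)
  qed
  also have "\<dots> = (\<integral>\<^sup>+ s. (\<integral>\<^sup>+ x. K s x \<partial>lborel) \<partial>lborel)
      + (\<integral>\<^sup>+ s. ennreal a * (ennreal (Q s) * indicator {0<..<1} s) \<partial>lborel)"
    unfolding K_def by (rule nn_integral_add) auto
  also have "(\<integral>\<^sup>+ s. (\<integral>\<^sup>+ x. K s x \<partial>lborel) \<partial>lborel) = (\<integral>\<^sup>+ x. (\<integral>\<^sup>+ s. K s x \<partial>lborel) \<partial>lborel)"
    unfolding K_def by (rule lborel_pair.Fubini'[symmetric]) measurable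
  also have "\<dots> \<le> (\<integral>\<^sup>+ x. ennreal (h x) * ennreal (U x) * indicator {0<..<1} x \<partial>lborel)"
  proof (rule nn_integral_mono)
    fix x :: real
    show "(\<integral>\<^sup>+ s. K s x \<partial>lborel) \<le> ennreal (h x) * ennreal (U x) * indicator {0<..<1} x"
    proof (cases "x \<in> {0<..<1}")
      case True
      have "(\<integral>\<^sup>+ s. K s x \<partial>lborel) \<le> (\<integral>\<^sup>+ s. ennreal (h x) * (ennreal (Q s) * indicator {0..x} s) \<partial>lborel)"
        unfolding K_def by (rule nn_integral_mono) (auto simp: indicator_def mult.commute)
      also have "\<dots> = ennreal (h x) * (\<integral>\<^sup>+ s. ennreal (Q s) * indicator {0..x} s \<partial>lborel)"
        by (rule nn_integral_cmult) measurable
      also have "\<dots> \<le> ennreal (h x) * ennreal (U x)"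
        using nn_integral_alloc_le_utility[OF d Qm, of x] True unfolding U_def
        by (intro mult_left_mono) auto
      finally show ?thesis using True by simp
    next
      case False
      then have "(\<integral>\<^sup>+ s. K s x \<partial>lborel) = 0"
        unfolding K_def by (intro nn_integral_zero') (auto simp: indicator_def)
      then show ?thesis by simp
    qed
  qed
  also have "(\<integral>\<^sup>+ s. ennreal a * (ennreal (Q s) * indicator {0<..<1} s) \<partial>lborel)
      \<le> ennreal a * (\<integral>\<^sup>+ s. ennreal (Q s) * indicator {0..1} s \<partial>lborel)"
    by (subst nn_integral_cmult) (auto intro!: mult_left_mono nn_integral_mono simp: indicator_def)
  also have "\<dots> \<le> ennreal a * ennreal (U 1)"
    using nn_integral_alloc_le_utility[OF d Qm, of 1] unfolding U_def by (intro mult_left_mono) auto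
  finally show ?thesis by (simp add: U_def add_mono)
qed

lemma ic_ir_schedule_slice_bound_measurable:
  assumes d: "ic_ir_schedule Q H"
    and Qm[measurable]: "Q \<in> borel_measurable borel" and Hm[measurable]: "H \<in> borel_measurable borel"
    and hm[measurable]: "h \<in> borel_measurable borel" and hpos: "\<And>x. 0 \<le> h x" and a: "0 \<le> a"
    and cond: "\<And>s. s \<in> {0<..<1} \<Longrightarrow>
      ennreal (s * h s) \<le> (\<integral>\<^sup>+ x. ennreal (h x) * indicator {s..<1} x \<partial>lborel) + ennreal a"
  shows "(\<integral>\<^sup>+ x. ennreal (h x) * indicator {0<..<1} x \<partial>lborel) + ennreal a
     \<le> (\<integral>\<^sup>+ x. ennreal (h x) * ennreal (1 - H x) * indicator {0<..<1} x \<partial>lborel)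
        + ennreal a * ennreal (1 - H 1) + ennreal a * ennreal (Q 1)"
proof -
  define I where "I g = (\<integral>\<^sup>+ x. ennreal (h x) * ennreal (g x) * indicator {0<..<1} x \<partial>lborel)" for g
  have Qb: "0 \<le> Q x" "Q x \<le> 1" "0 \<le> x * Q x - H x" "x * Q x \<le> 1" if "x \<in> {0..1}" for x
    using ic_ir_scheduleD(2-4)[OF d that that] that by (auto intro: mult_le_one)
  have I_add: "I g1 + I g2 = I (\<lambda>x. g1 x + g2 x)"
    if [measurable]: "g1 \<in> borel_measurable borel" "g2 \<in> borel_measurable borel"
      and "\<And>x. x \<in> {0<..<1} \<Longrightarrow> 0 \<le> g1 x \<and> 0 \<le> g2 x" for g1 g2
  proof -
    have "I g1 + I g2 = (\<integral>\<^sup>+ x. ennreal (h x) * ennreal (g1 x) * indicator {0<..<1} x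
        + ennreal (h x) * ennreal (g2 x) * indicator {0<..<1} x \<partial>lborel)"
      unfolding I_def by (rule nn_integral_add[symmetric]) auto
    also have "\<dots> = I (\<lambda>x. g1 x + g2 x)"
      unfolding I_def using that(3)
      by (intro nn_integral_cong) (auto simp: indicator_def distrib_left ennreal_plus)
    finally show ?thesis .
  qed
  have split_one: "(\<integral>\<^sup>+ x. ennreal (h x) * indicator {0<..<1} x \<partial>lborel) = I (\<lambda>x. 1 - x * Q x) + I (\<lambda>x. x * Q x)"
    using Qb I_add[of "\<lambda>x. 1 - x * Q x" "\<lambda>x. x * Q x"] by (simp add: I_def)
  have split_pay: "I (\<lambda>x. 1 - x * Q x) + I (\<lambda>x. x * Q x - H x) = I (\<lambda>x. 1 - H x)"
    using Qb I_add[of "\<lambda>x. 1 - x * Q x" "\<lambda>x. x * Q x - H x"] by auto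
  have split_top: "ennreal (Q 1 - H 1) + 1 = ennreal (1 - H 1) + ennreal (Q 1)"
  proof -
    have "ennreal (Q 1 - H 1) + ennreal 1 = ennreal (1 - H 1 + Q 1)"
      using Qb[of 1] by (subst ennreal_plus[symmetric]) (auto simp: algebra_simps)
    also have "\<dots> = ennreal (1 - H 1) + ennreal (Q 1)"
      using Qb[of 1] by (subst ennreal_plus) auto
    finally show ?thesis by simp
  qed
  have "(\<integral>\<^sup>+ x. ennreal (h x) * indicator {0<..<1} x \<partial>lborel) + ennreal a
      = I (\<lambda>x. 1 - x * Q x) + I (\<lambda>x. x * Q x) + ennreal a"
    by (simp add: split_one)
  also have "\<dots> \<le> I (\<lambda>x. 1 - x * Q x) + (I (\<lambda>x. x * Q x - H x) + ennreal a * ennreal (Q 1 - H 1)) + ennreal a"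
    unfolding I_def by (intro add_mono order_refl nn_integral_value_alloc_le_utility[OF d Qm hm hpos a cond])
  also have "\<dots> = I (\<lambda>x. 1 - H x) + ennreal a * (ennreal (Q 1 - H 1) + 1)"
    by (simp add: split_pay[symmetric] distrib_left ac_simps)
  also have "\<dots> = I (\<lambda>x. 1 - H x) + ennreal a * ennreal (1 - H 1) + ennreal a * ennreal (Q 1)"
    by (simp add: split_top distrib_left add.assoc)
  finally show ?thesis unfolding I_def .
qed

text \<open>In real terms: a bidder whose value has density \<open>h\<close> on \<open>(0, 1)\<close> and an atom \<open>a\<close> at \<open>1\<close>
  pays at most \<open>a * Q 1\<close> in expectation once \<open>h\<close> satisfies the hazard condition \<open>cond\<close>.\<close>
lemma ic_ir_schedule_slice_bound:
  assumes d: "ic_ir_schedule Q H"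
    and hm[measurable]: "h \<in> borel_measurable borel" and hpos: "\<And>x. 0 \<le> h x" and a: "0 \<le> a"
    and cond: "\<And>s. s \<in> {0<..<1} \<Longrightarrow>
      ennreal (s * h s) \<le> (\<integral>\<^sup>+ x. ennreal (h x) * indicator {s..<1} x \<partial>lborel) + ennreal a"
  shows "(\<integral>\<^sup>+ x. ennreal (h x) * indicator {0<..<1} x \<partial>lborel) + ennreal a
     \<le> (\<integral>\<^sup>+ x. ennreal (h x) * ennreal (1 - H x) * indicator {0<..<1} x \<partial>lborel)
        + ennreal a * ennreal (1 - H 1) + ennreal a * ennreal (Q 1)"
proof -
  have "(\<integral>\<^sup>+ x. ennreal (h x) * indicator {0<..<1} x \<partial>lborel) + ennreal a
     \<le> (\<integral>\<^sup>+ x. ennreal (h x) * ennreal (1 - H (clamp 0 1 x)) * indicator {0<..<1} x \<partial>lborel)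
        + ennreal a * ennreal (1 - H (clamp 0 1 1)) + ennreal a * ennreal (Q (clamp 0 1 1))"
    using ic_ir_schedule_measurable[OF d]
    by (intro ic_ir_schedule_slice_bound_measurable[OF ic_ir_schedule_clamp[OF d] _ _ hm hpos a cond])
  also have "(\<integral>\<^sup>+ x. ennreal (h x) * ennreal (1 - H (clamp 0 1 x)) * indicator {0<..<1} x \<partial>lborel)
      = (\<integral>\<^sup>+ x. ennreal (h x) * ennreal (1 - H x) * indicator {0<..<1} x \<partial>lborel)"
    by (intro nn_integral_cong) (simp add: indicator_def)
  finally show ?thesis by simp
qed

definition dyadic_ceil :: "nat \<Rightarrow> real \<Rightarrow> real" where
  "dyadic_ceil n x = real_of_int \<lceil>2^n * x\<rceil> / 2^n"

lemma dyadic_ceil_bounds: "x \<le> dyadic_ceil n x" "dyadic_ceil n x \<le> x + 1 / 2^n"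
  unfolding dyadic_ceil_def
  using le_of_int_ceiling[of "2^n * x"] of_int_ceiling_le_add_one[of "2^n * x"]
  by (simp_all add: field_simps)

lemma dyadic_ceil_in: "x \<in> {0..1} \<Longrightarrow> dyadic_ceil n x \<in> {0..1}"
proof -
  assume x: "x \<in> {0..1}"
  then have "\<lceil>2^n * x\<rceil> \<le> 2^n" by (simp add: ceiling_le_iff)
  then have "real_of_int \<lceil>2^n * x\<rceil> \<le> 2^n" by (metis of_int_le_iff of_int_numeral of_int_power)
  then have "dyadic_ceil n x \<le> 1" unfolding dyadic_ceil_def by (simp add: field_simps)
  then show ?thesis using x dyadic_ceil_bounds(1)[of x n] by auto
qed

lemma dyadic_ceil_Suc_le: "dyadic_ceil (Suc n) x \<le> dyadic_ceil n x"
proof -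
  have "2^(Suc n) * x \<le> real_of_int (2 * \<lceil>2^n * x\<rceil>)"
    using le_of_int_ceiling[of "2^n * x"] by simp
  then have "\<lceil>2^(Suc n) * x\<rceil> \<le> 2 * \<lceil>2^n * x\<rceil>" by (simp add: ceiling_le_iff)
  then have "real_of_int \<lceil>2^(Suc n) * x\<rceil> \<le> 2 * real_of_int \<lceil>2^n * x\<rceil>"
    by (metis of_int_le_iff of_int_mult of_int_numeral)
  then show ?thesis unfolding dyadic_ceil_def by (simp add: field_simps)
qed

lemma dyadic_ceil_one[simp]: "dyadic_ceil n 1 = 1"
  unfolding dyadic_ceil_def by simp

lemma LIMSEQ_dyadic_ceil: "(\<lambda>n. dyadic_ceil n x) \<longlonglongrightarrow> x"
proof (rule tendsto_sandwich[of "\<lambda>n. x" _ _ "\<lambda>n. x + 1 / 2^n"])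
  have "(\<lambda>n. 1 / (2::real)^n) \<longlonglongrightarrow> 0"
    using LIMSEQ_realpow_zero[of "1/2::real"] by (simp add: power_one_over)
  then show "(\<lambda>n. x + 1 / 2^n) \<longlonglongrightarrow> x" using tendsto_add[of "\<lambda>n. x" x] by fastforce
qed (auto simp: dyadic_ceil_bounds)

lemma mono_on_dyadic_ceil_limit:
  fixes g :: "real \<Rightarrow> real"
  assumes g: "mono_on {0..1} g" and x: "x \<in> {0..1}"
  shows "(\<lambda>n. g (dyadic_ceil n x)) \<longlonglongrightarrow> lim (\<lambda>n. g (dyadic_ceil n x))"
    and "g x \<le> lim (\<lambda>n. g (dyadic_ceil n x))"
proof -
  have below: "\<forall>n. g x \<le> g (dyadic_ceil n x)"
    using mono_onD[OF g x dyadic_ceil_in[OF x] dyadic_ceil_bounds(1)] by auto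
  have "decseq (\<lambda>n. g (dyadic_ceil n x))"
    unfolding decseq_Suc_iff using g x dyadic_ceil_in dyadic_ceil_Suc_le by (metis mono_onD)
  then obtain L where "(\<lambda>n. g (dyadic_ceil n x)) \<longlonglongrightarrow> L"
    using below by (rule decseq_convergent)
  then show conv: "(\<lambda>n. g (dyadic_ceil n x)) \<longlonglongrightarrow> lim (\<lambda>n. g (dyadic_ceil n x))"
    by (simp add: limI)
  show "g x \<le> lim (\<lambda>n. g (dyadic_ceil n x))"
    using below by (intro LIMSEQ_le_const[OF conv]) auto
qed

lemma borel_measurable_dyadic_section:
  fixes H :: "real \<Rightarrow> real \<Rightarrow> real"
  assumes m: "\<And>c. c \<in> {0..1} \<Longrightarrow> (\<lambda>y. H c (clamp 0 1 y)) \<in> borel_measurable borel"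
  shows "(\<lambda>p. H (clamp 0 1 (dyadic_ceil n (clamp 0 1 (fst p)))) (clamp 0 1 (snd p))) \<in> borel_measurable borel"
proof -
  have f: "(\<lambda>p::real\<times>real. H (clamp 0 1 (real_of_int i / 2^n)) (clamp 0 1 (snd p))) \<in> borel_measurable borel"
    for i :: int
  proof -
    have "(\<lambda>p::real\<times>real. H (clamp 0 1 (real_of_int i / 2^n)) (clamp 0 1 (snd p)))
        \<in> borel_measurable (borel \<Otimes>\<^sub>M borel)"
      by (rule measurable_compose[OF measurable_snd m[OF clamp01_in]])
    then show ?thesis by (simp add: borel_prod)
  qed
  have "(\<lambda>p::real\<times>real. \<lceil>2^n * clamp 0 1 (fst p)\<rceil>) \<in> measurable (borel \<Otimes>\<^sub>M borel) (count_space UNIV)"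
    by measurable
  then have "(\<lambda>p::real\<times>real. \<lceil>2^n * clamp 0 1 (fst p)\<rceil>) \<in> measurable borel (count_space UNIV)"
    by (simp add: borel_prod)
  from measurable_compose_countable[OF f this] show ?thesis
    unfolding dyadic_ceil_def .
qed

text \<open>The payment rule of an arbitrary mechanism need not be measurable.  Taking right limits of
  each monotone section along dyadic points yields a jointly measurable schedule that dominates
  it and agrees with it at the top value \<open>1\<close>.\<close>
lemma ic_ir_schedule_regularization:
  fixes Q H :: "real \<Rightarrow> real \<Rightarrow> real"
  assumes d: "\<And>y. y \<in> {0..1} \<Longrightarrow> ic_ir_schedule (\<lambda>x. Q x y) (\<lambda>x. H x y)"
    and m: "\<And>c. c \<in> {0..1} \<Longrightarrow> (\<lambda>y. H c (clamp 0 1 y)) \<in> borel_measurable borel"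
  obtains Hr Qr where "(\<lambda>p. Hr (fst p) (snd p)) \<in> borel_measurable borel"
    "\<And>y. y \<in> {0..1} \<Longrightarrow> ic_ir_schedule (\<lambda>x. Qr x y) (\<lambda>x. Hr x y)"
    "\<And>x y. x \<in> {0..1} \<Longrightarrow> y \<in> {0..1} \<Longrightarrow> H x y \<le> Hr x y"
    "\<And>y. y \<in> {0..1} \<Longrightarrow> Hr 1 y = H 1 y \<and> Qr 1 y = Q 1 y"
proof -
  define Hn where "Hn n x y = H (clamp 0 1 (dyadic_ceil n (clamp 0 1 x))) (clamp 0 1 y)" for n x y
  define Hr where "Hr x y = lim (\<lambda>n. Hn n x y)" for x y
  define Qr where "Qr x y = lim (\<lambda>n. Q (dyadic_ceil n x) y)" for x y
  have in01: "dyadic_ceil n x \<in> {0..1}" "clamp 0 1 x \<in> {0..1}" if "x \<in> {0..1}" for n x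
    using dyadic_ceil_in that by (auto simp: clamp01_in)
  have Hmono: "mono_on {0..1} (\<lambda>x. H x y)" and Qmono: "mono_on {0..1} (\<lambda>x. Q x y)"
    if "y \<in> {0..1}" for y
    using ic_ir_schedule_payment_mono[OF d[OF that]] ic_ir_schedule_alloc_mono[OF d[OF that]]
    by (auto intro!: mono_onI)
  have Hn_eq: "Hn n x y = H (dyadic_ceil n x) y" if "x \<in> {0..1}" "y \<in> {0..1}" for n x y
    using that in01 by (simp add: Hn_def)
  have cH: "(\<lambda>n. Hn n x y) \<longlonglongrightarrow> Hr x y" for x y
  proof -
    have "(\<lambda>n. Hn n x y) = (\<lambda>n. H (dyadic_ceil n (clamp 0 1 x)) (clamp 0 1 y))"
      using dyadic_ceil_in[OF clamp01_in] by (simp add: Hn_def)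
    then show ?thesis
      unfolding Hr_def using mono_on_dyadic_ceil_limit(1)[OF Hmono[OF clamp01_in] clamp01_in] by simp
  qed
  have cH': "(\<lambda>n. H (dyadic_ceil n x) y) \<longlonglongrightarrow> Hr x y" if "x \<in> {0..1}" "y \<in> {0..1}" for x y
    using cH[of x y] that by (simp add: Hn_eq)
  have cQ': "(\<lambda>n. Q (dyadic_ceil n x) y) \<longlonglongrightarrow> Qr x y" if "x \<in> {0..1}" "y \<in> {0..1}" for x y
    using mono_on_dyadic_ceil_limit(1)[OF Qmono that(1)] that by (simp add: Qr_def)
  show ?thesis
  proof
    show "(\<lambda>p. Hr (fst p) (snd p)) \<in> borel_measurable borel"
    proof (rule borel_measurable_LIMSEQ_real[OF cH])
      fix n
      show "(\<lambda>p. Hn n (fst p) (snd p)) \<in> borel_measurable borel"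
        unfolding Hn_def by (rule borel_measurable_dyadic_section[OF m])
    qed
  next
    fix y :: real assume y: "y \<in> {0..1}"
    note D = ic_ir_scheduleD[OF d[OF y] in01(1) in01(1)]
    show "ic_ir_schedule (\<lambda>x. Qr x y) (\<lambda>x. Hr x y)"
      unfolding ic_ir_schedule_def
    proof (intro conjI ballI)
      fix x w :: real assume x: "x \<in> {0..1}" and w: "w \<in> {0..1}"
      show "x * Qr w y - Hr w y \<le> x * Qr x y - Hr x y"
      proof (rule LIMSEQ_le)
        show "(\<lambda>n. dyadic_ceil n x * Q (dyadic_ceil n w) y - H (dyadic_ceil n w) y) \<longlonglongrightarrow> x * Qr w y - Hr w y"
          by (intro tendsto_intros LIMSEQ_dyadic_ceil cQ' cH' w y)
        show "(\<lambda>n. dyadic_ceil n x * Q (dyadic_ceil n x) y - H (dyadic_ceil n x) y) \<longlonglongrightarrow> x * Qr x y - Hr x y"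
          by (intro tendsto_intros LIMSEQ_dyadic_ceil cQ' cH' x y)
      qed (use D(1)[OF x w] in auto)
    next
      fix x :: real assume x: "x \<in> {0..1}"
      show "0 \<le> x * Qr x y - Hr x y"
        using D(2)[OF x x]
        by (intro LIMSEQ_le_const[of "\<lambda>n. dyadic_ceil n x * Q (dyadic_ceil n x) y - H (dyadic_ceil n x) y"])
          (auto intro!: tendsto_intros LIMSEQ_dyadic_ceil cQ' cH' x y)
      show "0 \<le> Qr x y" using D(3)[OF x x] by (intro LIMSEQ_le_const[OF cQ'[OF x y]]) auto
      show "Qr x y \<le> 1" using D(4)[OF x x] by (intro LIMSEQ_le_const2[OF cQ'[OF x y]]) auto
    qed
  next
    fix x y :: real assume x: "x \<in> {0..1}" and y: "y \<in> {0..1}"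
    show "H x y \<le> Hr x y"
      using mono_on_dyadic_ceil_limit[OF Hmono[OF y] x] LIMSEQ_unique cH'[OF x y] by metis
  next
    fix y :: real assume y: "y \<in> {0..1}"
    show "Hr 1 y = H 1 y \<and> Qr 1 y = Q 1 y"
      using cH'[of 1 y] cQ'[of 1 y] y LIMSEQ_unique by auto
  qed
qed

section \<open>Mechanisms\<close>

lemma DSIC_EPIR_mechanism_feasible:
  "DSIC_EPIR_mechanism q t \<Longrightarrow> x \<in> {0..1} \<Longrightarrow> y \<in> {0..1} \<Longrightarrow>
    0 \<le> fst (q (x, y)) \<and> 0 \<le> snd (q (x, y)) \<and> fst (q (x, y)) + snd (q (x, y)) \<le> 1"
  unfolding DSIC_EPIR_mechanism_def feasible_def by blast

lemma DSIC_EPIR_mechanism_ic_ir_schedule: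
  assumes "DSIC_EPIR_mechanism q t"
  shows "y \<in> {0..1} \<Longrightarrow> ic_ir_schedule (\<lambda>x. fst (q (x, y))) (\<lambda>x. fst (t (x, y)))"
    and "x \<in> {0..1} \<Longrightarrow> ic_ir_schedule (\<lambda>y. snd (q (x, y))) (\<lambda>y. snd (t (x, y)))"
proof -
  have ds: "DSIC q t" and ep: "EPIR q t"
    using assms unfolding DSIC_EPIR_mechanism_def by auto
  note fe = DSIC_EPIR_mechanism_feasible[OF assms]
  show "ic_ir_schedule (\<lambda>x. fst (q (x, y))) (\<lambda>x. fst (t (x, y)))" if y: "y \<in> {0..1}"
    unfolding ic_ir_schedule_def
  proof (intro conjI ballI)
    fix x w :: real assume "x \<in> {0..1}" "w \<in> {0..1}"
    then show "x * fst (q (w, y)) - fst (t (w, y)) \<le> x * fst (q (x, y)) - fst (t (x, y))"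
      using ds y unfolding DSIC_def by blast
  next
    fix x :: real assume x: "x \<in> {0..1}"
    show "0 \<le> x * fst (q (x, y)) - fst (t (x, y))" using ep x y unfolding EPIR_def by blast
    show "0 \<le> fst (q (x, y))" "fst (q (x, y)) \<le> 1" using fe[OF x y] by auto
  qed
  show "ic_ir_schedule (\<lambda>y. snd (q (x, y))) (\<lambda>y. snd (t (x, y)))" if x: "x \<in> {0..1}"
    unfolding ic_ir_schedule_def
  proof (intro conjI ballI)
    fix y w :: real assume "y \<in> {0..1}" "w \<in> {0..1}"
    then show "y * snd (q (x, w)) - snd (t (x, w)) \<le> y * snd (q (x, y)) - snd (t (x, y))"
      using ds x unfolding DSIC_def by blast
  next
    fix y :: real assume y: "y \<in> {0..1}"
    show "0 \<le> y * snd (q (x, y)) - snd (t (x, y))" using ep x y unfolding EPIR_def by blast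
    show "0 \<le> snd (q (x, y))" "snd (q (x, y)) \<le> 1" using fe[OF x y] by auto
  qed
qed

definition mirror :: "(real \<times> real \<Rightarrow> real \<times> real) \<Rightarrow> real \<times> real \<Rightarrow> real \<times> real" where
  "mirror q v = prod.swap (q (prod.swap v))"

lemma DSIC_EPIR_mechanism_mirror:
  "DSIC_EPIR_mechanism q t \<Longrightarrow> DSIC_EPIR_mechanism (mirror q) (mirror t)"
  unfolding DSIC_EPIR_mechanism_def feasible_def DSIC_def EPIR_def mirror_def by (auto simp: add.commute)

definition spa_alloc :: "real \<Rightarrow> real \<Rightarrow> real" where
  "spa_alloc w b = (if w > b then w else if b > w then 0 else w / 2)"

definition spa_payment :: "real \<Rightarrow> real \<Rightarrow> real" where
  "spa_payment w b = (if w > b then (w^2 + b^2) / 2 else if b > w then 0 else w^2 / 2)"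

lemma qstar_tstar_spa:
  "fst (qstar (w, b)) = spa_alloc w b" "fst (tstar (w, b)) = spa_payment w b"
  "snd (qstar (b, w)) = spa_alloc w b" "snd (tstar (b, w)) = spa_payment w b"
  by (auto simp: qstar_def tstar_def spa_alloc_def spa_payment_def Let_def add.commute)

lemma spa_truthful_utility:
  "0 \<le> b \<Longrightarrow> a * spa_alloc a b - spa_payment a b = (if b < a then (a^2 - b^2) / 2 else 0)"
  unfolding spa_alloc_def spa_payment_def by (auto simp: power2_eq_square field_simps)

lemma spa_deviation_utility_le:
  assumes "0 \<le> a" "0 \<le> b" "0 \<le> w"
  shows "a * spa_alloc w b - spa_payment w b \<le> (if b < a then (a^2 - b^2) / 2 else 0)"
proof -
  have "0 \<le> (a - w)^2" "0 \<le> (w - b)^2" by simp_all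
  moreover have "a * w \<le> b * w" "a * b \<le> b * b" if "a \<le> b"
    using that assms by (simp_all add: mult_right_mono)
  moreover have "b * b \<le> a * a" "b * a \<le> a * a" if "b \<le> a"
    using that assms by (simp_all add: mult_mono mult_right_mono)
  ultimately show ?thesis
    unfolding spa_alloc_def spa_payment_def power2_eq_square by (auto simp: field_simps)
qed

lemma DSIC_EPIR_mechanism_qstar_tstar: "DSIC_EPIR_mechanism qstar tstar"
  unfolding DSIC_EPIR_mechanism_def feasible_def DSIC_def EPIR_def
  using spa_truthful_utility spa_deviation_utility_le
  by (auto simp: qstar_tstar_spa) (auto simp: spa_alloc_def)

lemma tstar_total: "fst (tstar v) + snd (tstar v) = ((fst v)^2 + (snd v)^2) / 2"
  by (auto simp: tstar_def Let_def)

lemma revenue_tstar: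
  assumes F_sets: "sets F = sets borel" and F_supp: "emeasure F (- {0..1}) = 0" and \<pi>: "\<pi> \<in> PiF F"
  shows "revenue tstar \<pi> = (\<integral>x. x^2 \<partial>F)"
proof -
  have sp: "sets \<pi> = sets borel" and d1: "distr \<pi> borel fst = F" and d2: "distr \<pi> borel snd = F"
    and "prob_space \<pi>"
    using \<pi> by (auto simp: PiF_def)
  have fm: "fst \<in> measurable \<pi> borel" "snd \<in> measurable \<pi> borel"
    using sp by (simp_all add: borel_prod[symmetric] cong: measurable_cong_sets)
  interpret F: prob_space F
    using prob_space.prob_space_distr[OF \<open>prob_space \<pi>\<close> fm(1)] d1 by simp
  have "AE x in F. x \<in> {0..1}"
    using F_supp F_sets by (intro AE_I'[of "- {0..1}"]) (auto simp: null_sets_def)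
  then have "AE x in F. norm (x^2) \<le> (1::real)"
    by eventually_elim (auto simp: abs_square_le_1)
  then have sq: "integrable F (\<lambda>x. x^2)"
    using F_sets by (intro F.integrable_const_bound[where B=1]) (auto cong: measurable_cong_sets)
  have "revenue tstar \<pi> = (\<integral>v. (fst v)^2 \<partial>\<pi>) / 2 + (\<integral>v. (snd v)^2 \<partial>\<pi>) / 2"
    using integrable_distr_eq[OF fm(1), of "\<lambda>x. x^2"] integrable_distr_eq[OF fm(2), of "\<lambda>x. x^2"]
      sq d1 d2 by (simp add: revenue_def tstar_total add_divide_distrib)
  also have "\<dots> = (\<integral>x. x^2 \<partial>F)"
    using integral_distr[OF fm(1), of "\<lambda>x. x^2"] integral_distr[OF fm(2), of "\<lambda>x. x^2"] d1 d2 by simp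
  finally show ?thesis .
qed

lemma DSIC_EPIR_mechanism_measurable_sections:
  assumes mech: "DSIC_EPIR_mechanism q t"
    and Tm: "(\<lambda>v. fst (t v) + snd (t v)) \<in> borel_measurable borel" and c: "c \<in> {0..1}"
  shows "(\<lambda>x. fst (q (clamp 0 1 x, c))) \<in> borel_measurable borel"
    and "(\<lambda>y. snd (q (c, clamp 0 1 y))) \<in> borel_measurable borel"
    and "(\<lambda>x. fst (t (clamp 0 1 x, c))) \<in> borel_measurable borel"
    and "(\<lambda>y. snd (t (c, clamp 0 1 y))) \<in> borel_measurable borel"
    and "(\<lambda>y. fst (t (c, clamp 0 1 y))) \<in> borel_measurable borel"
    and "(\<lambda>x. snd (t (clamp 0 1 x, c))) \<in> borel_measurable borel"
proof -
  note d1 = DSIC_EPIR_mechanism_ic_ir_schedule(1)[OF mech c]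
  note d2 = DSIC_EPIR_mechanism_ic_ir_schedule(2)[OF mech c]
  show q1: "(\<lambda>x. fst (q (clamp 0 1 x, c))) \<in> borel_measurable borel"
    and q2: "(\<lambda>y. snd (q (c, clamp 0 1 y))) \<in> borel_measurable borel"
    and t1: "(\<lambda>x. fst (t (clamp 0 1 x, c))) \<in> borel_measurable borel"
    and t2: "(\<lambda>y. snd (t (c, clamp 0 1 y))) \<in> borel_measurable borel"
    using ic_ir_schedule_measurable[OF d1] ic_ir_schedule_measurable[OF d2] by auto
  \<comment> \<open>Along the other axis, a payment is the measurable total minus the opponent's monotone payment.\<close>
  have "(\<lambda>y::real. (c, clamp 0 1 y)) \<in> measurable borel borel"
    using measurable_compose[OF borel_measurable_clamp01 measurable_Pair_real(1)[of c]] by simp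
  from measurable_compose[OF this Tm]
  have "(\<lambda>y. fst (t (c, clamp 0 1 y)) + snd (t (c, clamp 0 1 y)) - snd (t (c, clamp 0 1 y))) \<in> borel_measurable borel"
    using t2 by (rule borel_measurable_diff)
  then show "(\<lambda>y. fst (t (c, clamp 0 1 y))) \<in> borel_measurable borel" by simp
  have "(\<lambda>x::real. (clamp 0 1 x, c)) \<in> measurable borel borel"
    using measurable_compose[OF borel_measurable_clamp01 measurable_Pair_real(2)[of c]] by simp
  from measurable_compose[OF this Tm]
  have "(\<lambda>x. fst (t (clamp 0 1 x, c)) + snd (t (clamp 0 1 x, c)) - fst (t (clamp 0 1 x, c))) \<in> borel_measurable borel"
    using t1 by (rule borel_measurable_diff)
  then show "(\<lambda>x. snd (t (clamp 0 1 x, c))) \<in> borel_measurable borel" by simp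
qed

section \<open>The adversarial correlation structure\<close>

locale regular_prior =
  fixes F :: "real measure" and f :: "real \<Rightarrow> real"
  assumes F_prob: "prob_space F"
    and F_sets: "sets F = sets borel"
    and F_supp1: "emeasure F (- {0..1}) = 0"
    and f_meas: "set_borel_measurable lborel {0<..<1} f"
    and f_nonneg: "\<forall>x\<in>{0<..<1}. 0 \<le> f x"
    and F_dens: "\<forall>A\<in>sets borel.
         emeasure F (A \<inter> {0<..<1}) = (\<integral>\<^sup>+ x\<in>A \<inter> {0<..<1}. ennreal (f x) \<partial>lborel)"
    and reg1: "mono_on {0<..<1} (\<lambda>x. x^2 * f x)"
    and reg2: "measure F {1} \<ge> (LINT x:{0<..<1}|lborel. x^2 * f x)"
begin

interpretation F: prob_space F by (rule F_prob)

abbreviation "F0 \<equiv> measure F {0}"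
abbreviation "F1 \<equiv> measure F {1}"

definition f01 :: "real \<Rightarrow> real" where "f01 x = f x * indicator {0<..<1} x"

lemma borel_measurable_f01[measurable]: "f01 \<in> borel_measurable borel"
proof -
  have "(\<lambda>x. indicator {0<..<1} x *\<^sub>R f x) \<in> borel_measurable borel"
    using f_meas unfolding set_borel_measurable_def by simp
  moreover have "(\<lambda>x. indicator {0<..<1} x *\<^sub>R f x) = f01" by (auto simp: f01_def fun_eq_iff)
  ultimately show ?thesis by simp
qed

lemma f01_nonneg: "0 \<le> f01 x"
  using f_nonneg by (auto simp: f01_def indicator_def)

lemma emeasure_F:
  assumes A: "A \<in> sets borel"
  shows "emeasure F A = ennreal F0 * indicator A 0
     + (\<integral>\<^sup>+ x. ennreal (f01 x) * indicator A x \<partial>lborel) + ennreal F1 * indicator A 1"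
proof -
  have sets: "A \<inter> {0} \<in> sets F" "A \<inter> {0<..<1} \<in> sets F" "A \<inter> {1} \<in> sets F" "A - {0..1} \<in> sets F"
    using A F_sets by auto
  have "A = (((A \<inter> {0}) \<union> (A \<inter> {0<..<1})) \<union> (A \<inter> {1})) \<union> (A - {0..1})" by auto
  then have "emeasure F A = emeasure F ((((A \<inter> {0}) \<union> (A \<inter> {0<..<1})) \<union> (A \<inter> {1})) \<union> (A - {0..1}))"
    by simp
  also have "\<dots> = emeasure F (A \<inter> {0}) + emeasure F (A \<inter> {0<..<1}) + emeasure F (A \<inter> {1})
      + emeasure F (A - {0..1})"
    using sets by (subst plus_emeasure[symmetric], auto)+
  also have "emeasure F (A - {0..1}) = 0"
  proof -
    have "emeasure F (A - {0..1}) \<le> emeasure F (- {0..1})"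
      by (rule emeasure_mono) (use F_sets in auto)
    then show ?thesis using F_supp1 by simp
  qed
  also have "emeasure F (A \<inter> {0}) = ennreal F0 * indicator A 0"
    by (cases "0 \<in> A") (auto simp: F.emeasure_eq_measure Int_absorb1)
  also have "emeasure F (A \<inter> {1}) = ennreal F1 * indicator A 1"
    by (cases "1 \<in> A") (auto simp: F.emeasure_eq_measure Int_absorb1)
  also have "emeasure F (A \<inter> {0<..<1}) = (\<integral>\<^sup>+ x. ennreal (f01 x) * indicator A x \<partial>lborel)"
    using F_dens A by (auto intro!: nn_integral_cong simp: f01_def indicator_def)
  finally show ?thesis by simp
qed

lemma nn_integral_f01_finite: "(\<integral>\<^sup>+ x. ennreal (f01 x) \<partial>lborel) < \<infinity>"
proof -
  have "(\<integral>\<^sup>+ x. ennreal (f01 x) \<partial>lborel) = (\<integral>\<^sup>+ x. ennreal (f01 x) * indicator {0<..<1} x \<partial>lborel)"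
    by (rule nn_integral_cong) (auto simp: f01_def indicator_def)
  also have "\<dots> = emeasure F {0<..<1}"
    using emeasure_F[of "{0<..<1}"] by simp
  finally show ?thesis by (simp add: F.emeasure_eq_measure)
qed

lemma nn_integral_F:
  assumes h[measurable]: "h \<in> borel_measurable borel"
  shows "(\<integral>\<^sup>+ x. h x \<partial>F) = ennreal F0 * h 0 + (\<integral>\<^sup>+ x. ennreal (f01 x) * h x \<partial>lborel) + ennreal F1 * h 1"
proof -
  define N0 where "N0 = scale_measure (ennreal F0) (return borel (0::real))"
  define Nd where "Nd = density lborel (\<lambda>x. ennreal (f01 x))"
  define N1 where "N1 = scale_measure (ennreal F1) (return borel (1::real))"
  have s: "sets (add_measure N0 Nd) = sets borel" "sets N1 = sets borel" "sets Nd = sets borel" "sets N0 = sets borel"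
    by (simp_all add: N0_def Nd_def N1_def)
  have "F = add_measure (add_measure N0 Nd) N1"
  proof (rule measure_eqI)
    fix A assume "A \<in> sets F"
    then have A: "A \<in> sets borel" using F_sets by simp
    then show "emeasure F A = emeasure (add_measure (add_measure N0 Nd) N1) A"
      by (simp add: emeasure_add_measure s emeasure_F N0_def N1_def Nd_def emeasure_density mult.commute)
  qed (simp add: F_sets s)
  then have "(\<integral>\<^sup>+ x. h x \<partial>F) = (\<integral>\<^sup>+ x. h x \<partial>N0) + (\<integral>\<^sup>+ x. h x \<partial>Nd) + (\<integral>\<^sup>+ x. h x \<partial>N1)"
    using s by (simp add: nn_integral_add_measure cong: measurable_cong_sets)
  then show ?thesis
    by (simp add: N0_def Nd_def N1_def nn_integral_scale_measure nn_integral_return nn_integral_density)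
qed

definition mom2 :: "real \<Rightarrow> real" where "mom2 v = (LINT s:{0<..<v}|lborel. s^2 * f s)"

definition mom2_nn :: "real \<Rightarrow> ennreal" where
  "mom2_nn v = (\<integral>\<^sup>+ s. ennreal (s^2 * f01 s) * indicator {0<..<v} s \<partial>lborel)"

lemma borel_measurable_mom2_nn[measurable]: "mom2_nn \<in> borel_measurable borel"
proof -
  have "(\<lambda>(v, s). ennreal (s^2 * f01 s) * indicator {0<..<v} s) \<in> borel_measurable (borel \<Otimes>\<^sub>M lborel)"
    by measurable
  then show ?thesis unfolding mom2_nn_def by (rule lborel.borel_measurable_nn_integral)
qed

lemma mom2_nn_eq:
  assumes v: "0 < v" "v \<le> 1"
  shows "mom2_nn v = ennreal (mom2 v)" and mom2_nonneg: "0 \<le> mom2 v"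
proof -
  define \<phi> where "\<phi> s = indicator {0<..<v} s * (s^2 * f01 s)" for s :: real
  have \<phi>m[measurable]: "\<phi> \<in> borel_measurable borel" unfolding \<phi>_def by measurable
  have \<phi>0: "0 \<le> \<phi> s" for s unfolding \<phi>_def using f01_nonneg[of s] by simp
  have mom2_eq: "mom2 v = (\<integral>s. \<phi> s \<partial>lborel)"
    unfolding mom2_def set_lebesgue_integral_def \<phi>_def
    by (rule Bochner_Integration.integral_cong) (use v in \<open>auto simp: f01_def indicator_def\<close>)
  have "(\<integral>\<^sup>+ s. ennreal (norm (\<phi> s)) \<partial>lborel) \<le> (\<integral>\<^sup>+ s. ennreal (f01 s) \<partial>lborel)"
  proof (rule nn_integral_mono)
    fix s
    have "s^2 * f01 s \<le> f01 s" if "s \<in> {0<..<v}"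
      using that v f01_nonneg[of s] by (simp add: mult_left_le_one_le power_le_one)
    then show "ennreal (norm (\<phi> s)) \<le> ennreal (f01 s)"
      using \<phi>0[of s] f01_nonneg[of s] by (auto simp: \<phi>_def indicator_def)
  qed
  also have "\<dots> < \<infinity>" by (rule nn_integral_f01_finite)
  finally have "integrable lborel \<phi>" by (intro integrableI_bounded) auto
  then have "(\<integral>\<^sup>+ s. ennreal (\<phi> s) \<partial>lborel) = ennreal (mom2 v)"
    unfolding mom2_eq by (rule nn_integral_eq_integral) (simp add: \<phi>0)
  moreover have "(\<integral>\<^sup>+ s. ennreal (\<phi> s) \<partial>lborel) = mom2_nn v"
    unfolding mom2_nn_def \<phi>_def by (rule nn_integral_cong) (auto simp: indicator_def)
  ultimately show "mom2_nn v = ennreal (mom2 v)" by simp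
  show "0 \<le> mom2 v" unfolding mom2_eq using \<phi>0 by simp
qed

lemma mom2_le:
  assumes v: "0 < v" "v < 1"
  shows "mom2 v \<le> v^3 * f v"
proof -
  have fv: "0 \<le> f v" using f_nonneg v by auto
  have "ennreal (mom2 v) = mom2_nn v" using mom2_nn_eq v by simp
  also have "\<dots> \<le> (\<integral>\<^sup>+ s. ennreal (v^2 * f v) * indicator {0<..<v} s \<partial>lborel)"
    unfolding mom2_nn_def
  proof (rule nn_integral_mono)
    fix s
    have "s^2 * f s \<le> v^2 * f v" if "0 < s" "s < v"
      using reg1 that v by (auto intro: mono_onD)
    then show "ennreal (s^2 * f01 s) * indicator {0<..<v} s \<le> ennreal (v^2 * f v) * indicator {0<..<v} s"
      using v by (auto simp: indicator_def f01_def intro!: ennreal_leI)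
  qed
  also have "\<dots> = ennreal (v^2 * f v) * ennreal v"
    using v by (simp add: nn_integral_cmult_indicator)
  also have "\<dots> = ennreal (v^3 * f v)"
    using v fv by (simp add: ennreal_mult'[symmetric] power3_eq_cube power2_eq_square mult_ac)
  finally show ?thesis using v fv by (subst (asm) ennreal_le_iff) auto
qed

definition g01 :: "real \<Rightarrow> real" where "g01 v = gstar f v * indicator {0<..<1} v"

lemma gstar_eq: "gstar f v = v * f v - mom2 v / v^2"
  unfolding gstar_def mom2_def ..

lemma g01_eq: "v \<in> {0<..<1} \<Longrightarrow> g01 v = v * f v - mom2 v / v^2"
  by (simp add: g01_def gstar_eq)

lemma gstar_nonneg: "0 < v \<Longrightarrow> v < 1 \<Longrightarrow> 0 \<le> gstar f v"
proof -
  assume v: "0 < v" "v < 1"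
  have "mom2 v / v^2 \<le> v^3 * f v / v^2" using mom2_le[OF v] v by (intro divide_right_mono) auto
  also have "\<dots> = v * f v" using v by (simp add: power2_eq_square power3_eq_cube)
  finally show ?thesis unfolding gstar_eq by simp
qed

lemma g01_nonneg: "0 \<le> g01 v"
  using gstar_nonneg[of v] by (auto simp: g01_def indicator_def)

lemma g01_zero: "v \<notin> {0<..<1} \<Longrightarrow> g01 v = 0"
  by (simp add: g01_def)

lemma borel_measurable_g01[measurable]: "g01 \<in> borel_measurable borel"
proof -
  have "(\<lambda>v. (v * f01 v - enn2real (mom2_nn v) / v^2) * indicator {0<..<1} v) \<in> borel_measurable borel"
    by measurable
  moreover have "(\<lambda>v. (v * f01 v - enn2real (mom2_nn v) / v^2) * indicator {0<..<1} v) = g01"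
    by (auto simp: fun_eq_iff g01_def gstar_eq f01_def indicator_def mom2_nn_eq)
  ultimately show ?thesis by simp
qed

lemma nn_integral_mom2_div_square:
  assumes v: "0 < v" "v \<le> 1"
  shows "(\<integral>\<^sup>+ s. ennreal (mom2 s / s^2) * indicator {0<..<v} s \<partial>lborel) + ennreal (mom2 v / v)
    = (\<integral>\<^sup>+ u. ennreal (u * f01 u) * indicator {0<..<v} u \<partial>lborel)"
proof -
  define K where "K s u = ennreal (1 / s^2) * indicator {0<..<v} s * (ennreal (u^2 * f01 u) * indicator {0<..<s} u)"
    for s u :: real
  have "(\<integral>\<^sup>+ s. ennreal (mom2 s / s^2) * indicator {0<..<v} s \<partial>lborel)
      = (\<integral>\<^sup>+ s. (\<integral>\<^sup>+ u. K s u \<partial>lborel) \<partial>lborel)"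
  proof (rule nn_integral_cong)
    fix s :: real
    have "(\<integral>\<^sup>+ u. K s u \<partial>lborel) = ennreal (1 / s^2) * indicator {0<..<v} s * mom2_nn s"
      unfolding K_def mom2_nn_def by (rule nn_integral_cmult) measurable
    also have "\<dots> = ennreal (mom2 s / s^2) * indicator {0<..<v} s"
      using v mom2_nn_eq[of s] mom2_nonneg[of s]
      by (auto simp: indicator_def ennreal_mult[symmetric] mult.commute)
    finally show "ennreal (mom2 s / s^2) * indicator {0<..<v} s = (\<integral>\<^sup>+ u. K s u \<partial>lborel)" ..
  qed
  also have "\<dots> = (\<integral>\<^sup>+ u. (\<integral>\<^sup>+ s. K s u \<partial>lborel) \<partial>lborel)"
    unfolding K_def by (rule lborel_pair.Fubini') measurable
  also have "\<dots> = (\<integral>\<^sup>+ u. ennreal (u^2 * f01 u) * indicator {0<..<v} u * ennreal (1 / u - 1 / v) \<partial>lborel)"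
  proof (rule nn_integral_cong)
    fix u :: real
    show "(\<integral>\<^sup>+ s. K s u \<partial>lborel) = ennreal (u^2 * f01 u) * indicator {0<..<v} u * ennreal (1 / u - 1 / v)"
    proof (cases "u \<in> {0<..<v}")
      case True
      have "(\<integral>\<^sup>+ s. K s u \<partial>lborel)
          = (\<integral>\<^sup>+ s. ennreal (u^2 * f01 u) * (ennreal (1 / s^2) * indicator {u<..<v} s) \<partial>lborel)"
        unfolding K_def by (rule nn_integral_cong) (use True in \<open>auto simp: indicator_def mult_ac\<close>)
      also have "\<dots> = ennreal (u^2 * f01 u) * (\<integral>\<^sup>+ s. ennreal (1 / s^2) * indicator {u<..<v} s \<partial>lborel)"
        by (rule nn_integral_cmult) measurable
      also have "(\<integral>\<^sup>+ s. ennreal (1 / s^2) * indicator {u<..<v} s \<partial>lborel) = ennreal (1 / u - 1 / v)"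
        unfolding nn_integral_lborel_interval_endpoints using True by (intro nn_integral_inverse_square) auto
      finally show ?thesis using True by simp
    next
      case False
      have "(\<integral>\<^sup>+ s. K s u \<partial>lborel) = (\<integral>\<^sup>+ s. 0 \<partial>(lborel :: real measure))"
        unfolding K_def by (rule nn_integral_cong) (use False in \<open>auto simp: indicator_def\<close>)
      then show ?thesis using False by simp
    qed
  qed
  finally have J: "(\<integral>\<^sup>+ s. ennreal (mom2 s / s^2) * indicator {0<..<v} s \<partial>lborel)
    = (\<integral>\<^sup>+ u. ennreal (u^2 * f01 u) * indicator {0<..<v} u * ennreal (1 / u - 1 / v) \<partial>lborel)" .
  have mv: "ennreal (mom2 v / v) = (\<integral>\<^sup>+ u. ennreal (u^2 * f01 u) * indicator {0<..<v} u * ennreal (1 / v) \<partial>lborel)"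
  proof -
    have "ennreal (mom2 v / v) = ennreal (mom2 v) * ennreal (1 / v)"
      using mom2_nonneg[OF v] v by (simp add: ennreal_mult[symmetric])
    also have "\<dots> = (\<integral>\<^sup>+ u. ennreal (u^2 * f01 u) * indicator {0<..<v} u * ennreal (1 / v) \<partial>lborel)"
      unfolding mom2_nn_eq(1)[OF v, symmetric] mom2_nn_def by (rule nn_integral_multc[symmetric]) measurable
    finally show ?thesis .
  qed
  have "(\<integral>\<^sup>+ s. ennreal (mom2 s / s^2) * indicator {0<..<v} s \<partial>lborel) + ennreal (mom2 v / v)
      = (\<integral>\<^sup>+ u. ennreal (u^2 * f01 u) * indicator {0<..<v} u * ennreal (1 / u - 1 / v)
          + ennreal (u^2 * f01 u) * indicator {0<..<v} u * ennreal (1 / v) \<partial>lborel)"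
    unfolding J mv by (intro nn_integral_add[symmetric]) auto
  also have "\<dots> = (\<integral>\<^sup>+ u. ennreal (u * f01 u) * indicator {0<..<v} u \<partial>lborel)"
  proof (rule nn_integral_cong)
    fix u :: real
    show "ennreal (u^2 * f01 u) * indicator {0<..<v} u * ennreal (1 / u - 1 / v)
        + ennreal (u^2 * f01 u) * indicator {0<..<v} u * ennreal (1 / v) = ennreal (u * f01 u) * indicator {0<..<v} u"
    proof (cases "u \<in> {0<..<v}")
      case True
      then have "ennreal (1 / u - 1 / v) + ennreal (1 / v) = ennreal (1 / u)"
        by (subst ennreal_plus[symmetric]) (auto simp: frac_le)
      then have "ennreal (u^2 * f01 u) * ennreal (1 / u - 1 / v) + ennreal (u^2 * f01 u) * ennreal (1 / v)
          = ennreal (u^2 * f01 u) * ennreal (1 / u)"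
        by (metis distrib_left)
      also have "\<dots> = ennreal (u * f01 u)"
        using True f01_nonneg[of u] by (simp add: ennreal_mult[symmetric] power2_eq_square)
      finally show ?thesis using True by simp
    qed simp
  qed
  finally show ?thesis .
qed

lemma nn_integral_g01_Ioo:
  assumes v: "0 < v" "v \<le> 1"
  shows "(\<integral>\<^sup>+ s. ennreal (g01 s) * indicator {0<..<v} s \<partial>lborel) = ennreal (mom2 v / v)"
proof -
  define J where "J = (\<integral>\<^sup>+ s. ennreal (mom2 s / s^2) * indicator {0<..<v} s \<partial>lborel)"
  define S where "S = (\<integral>\<^sup>+ s. ennreal (s * f01 s) * indicator {0<..<v} s \<partial>lborel)"
  have J_measurable: "(\<lambda>s. ennreal (mom2 s / s^2) * indicator {0<..<v} s) \<in> borel_measurable borel"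
  proof -
    have "(\<lambda>s. ennreal (enn2real (mom2_nn s) / s^2) * indicator {0<..<v} s) \<in> borel_measurable borel"
      by measurable
    moreover have "(\<lambda>s. ennreal (enn2real (mom2_nn s) / s^2) * indicator {0<..<v} s)
        = (\<lambda>s. ennreal (mom2 s / s^2) * indicator {0<..<v} s)"
      using v by (auto simp: fun_eq_iff indicator_def mom2_nn_eq mom2_nonneg)
    ultimately show ?thesis by simp
  qed
  have "S = (\<integral>\<^sup>+ s. ennreal (g01 s) * indicator {0<..<v} s + ennreal (mom2 s / s^2) * indicator {0<..<v} s \<partial>lborel)"
    unfolding S_def
  proof (rule nn_integral_cong)
    fix s :: real
    show "ennreal (s * f01 s) * indicator {0<..<v} s
        = ennreal (g01 s) * indicator {0<..<v} s + ennreal (mom2 s / s^2) * indicator {0<..<v} s"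
    proof (cases "s \<in> {0<..<v}")
      case True
      then have "s * f01 s = g01 s + mom2 s / s^2" and "0 \<le> mom2 s / s^2"
        using v mom2_nonneg[of s] by (simp_all add: g01_eq f01_def)
      then show ?thesis using True g01_nonneg[of s] by (simp add: ennreal_plus)
    qed simp
  qed
  also have "\<dots> = (\<integral>\<^sup>+ s. ennreal (g01 s) * indicator {0<..<v} s \<partial>lborel) + J"
    unfolding J_def using J_measurable by (intro nn_integral_add) auto
  finally have a: "S = (\<integral>\<^sup>+ s. ennreal (g01 s) * indicator {0<..<v} s \<partial>lborel) + J" .
  have b: "J + ennreal (mom2 v / v) = S"
    unfolding J_def S_def by (rule nn_integral_mom2_div_square[OF v])
  have "S \<le> (\<integral>\<^sup>+ s. ennreal (f01 s) \<partial>lborel)"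
    unfolding S_def using v f01_nonneg
    by (intro nn_integral_mono) (auto simp: indicator_def intro!: ennreal_leI mult_left_le_one_le)
  then have "J < \<infinity>"
    using b nn_integral_f01_finite by (metis le_iff_add order.strict_trans1)
  with a b show ?thesis
    by (metis add.commute ennreal_add_left_cancel less_irrefl)
qed

lemma nn_integral_g01: "(\<integral>\<^sup>+ x. ennreal (g01 x) \<partial>lborel) = ennreal (mom2 1)"
proof -
  have "(\<integral>\<^sup>+ x. ennreal (g01 x) \<partial>lborel) = (\<integral>\<^sup>+ x. ennreal (g01 x) * indicator {0<..<1} x \<partial>lborel)"
    by (rule nn_integral_cong) (auto simp: g01_def indicator_def)
  also have "\<dots> = ennreal (mom2 1 / 1)" by (rule nn_integral_g01_Ioo) auto
  finally show ?thesis by simp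
qed

lemma nn_integral_g01_Ico:
  assumes "0 < s" "s < y" "y \<le> 1"
  shows "(\<integral>\<^sup>+ x. ennreal (g01 x) * indicator {s..<y} x \<partial>lborel) = ennreal (mom2 y / y - mom2 s / s)"
    and "mom2 s / s \<le> mom2 y / y"
proof -
  define X where "X = (\<integral>\<^sup>+ x. ennreal (g01 x) * indicator {s..<y} x \<partial>lborel)"
  have "ennreal (mom2 y / y) = (\<integral>\<^sup>+ x. ennreal (g01 x) * indicator {0<..<y} x \<partial>lborel)"
    using assms by (intro nn_integral_g01_Ioo[symmetric]) auto
  also have "\<dots> = (\<integral>\<^sup>+ x. ennreal (g01 x) * indicator {0<..<s} x + ennreal (g01 x) * indicator {s..<y} x \<partial>lborel)"
    by (rule nn_integral_cong) (use assms in \<open>auto simp: indicator_def\<close>)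
  also have "\<dots> = ennreal (mom2 s / s) + X"
    unfolding X_def using assms by (subst nn_integral_add) (auto simp: nn_integral_g01_Ioo)
  finally have e: "ennreal (mom2 y / y) = ennreal (mom2 s / s) + X" .
  have nonneg: "0 \<le> mom2 s / s" "0 \<le> mom2 y / y"
    using mom2_nonneg[of s] mom2_nonneg[of y] assms by simp_all
  show "mom2 s / s \<le> mom2 y / y"
    using e nonneg by (metis ennreal_le_iff le_iff_add)
  have "X = (ennreal (mom2 s / s) + X) - ennreal (mom2 s / s)" by simp
  also have "\<dots> = ennreal (mom2 y / y - mom2 s / s)"
    unfolding e[symmetric] using nonneg(1) by (rule ennreal_minus)
  finally show "X = ennreal (mom2 y / y - mom2 s / s)" .
qed

definition top_mass :: real where "top_mass = F1 - mom2 1"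

lemma top_mass_nonneg: "0 \<le> top_mass"
  using reg2 by (simp add: top_mass_def mom2_def)

lemma ennreal_mom2_top_mass: "ennreal (mom2 1) + ennreal top_mass = ennreal F1"
  using mom2_nonneg[of 1] top_mass_nonneg by (simp add: top_mass_def flip: ennreal_plus)

lemma F1_eq: "F1 = mom2 1 + top_mass"
  by (simp add: top_mass_def)

abbreviation "dens \<equiv> pistar_dens f"

lemma dens_eq: "dens v = (if 0 < snd v \<and> snd v \<le> fst v \<and> fst v < 1 then g01 (snd v) / (fst v)^2
     else if 0 < fst v \<and> fst v < snd v \<and> snd v < 1 then g01 (fst v) / (snd v)^2 else 0)"
  by (auto simp: pistar_dens_def g01_def Let_def indicator_def)

lemma borel_measurable_dens[measurable]:
  "dens \<in> borel_measurable borel" "dens \<in> borel_measurable (lborel \<Otimes>\<^sub>M lborel)"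
proof -
  have "(\<lambda>v::real\<times>real. if 0 < snd v \<and> snd v \<le> fst v \<and> fst v < 1 then g01 (snd v) / (fst v)^2
     else if 0 < fst v \<and> fst v < snd v \<and> snd v < 1 then g01 (fst v) / (snd v)^2 else 0)
      \<in> borel_measurable (borel \<Otimes>\<^sub>M borel)"
    by measurable
  then show "dens \<in> borel_measurable borel" "dens \<in> borel_measurable (lborel \<Otimes>\<^sub>M lborel)"
    by (simp_all add: borel_prod lborel_prod dens_eq[abs_def])
qed

lemma dens_nonneg: "0 \<le> dens v"
  unfolding dens_eq using g01_nonneg by auto

lemma dens_swap: "dens (x, y) = dens (y, x)"
  unfolding dens_eq by auto

lemma dens_zero: "\<not> (x \<in> {0<..<1} \<and> y \<in> {0<..<1}) \<Longrightarrow> dens (x, y) = 0"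
  unfolding dens_eq by auto

lemma nn_integral_dens_row:
  assumes x: "x \<in> {0<..<1}"
  shows "(\<integral>\<^sup>+ y. ennreal (dens (x, y)) \<partial>lborel) = ennreal (mom2 x / x^3 + g01 x * (1 / x - 1))"
proof -
  have x0: "0 < x" "x < 1" using x by auto
  have "(\<integral>\<^sup>+ y. ennreal (dens (x, y)) \<partial>lborel)
      = (\<integral>\<^sup>+ y. ennreal (1 / x^2) * (ennreal (g01 y) * indicator {0<..x} y)
            + ennreal (g01 x) * (ennreal (1 / y^2) * indicator {x<..<1} y) \<partial>lborel)"
    using x0 g01_nonneg
    by (intro nn_integral_cong) (auto simp: dens_eq indicator_def ennreal_mult'[symmetric] mult.commute)
  also have "\<dots> = ennreal (1 / x^2) * (\<integral>\<^sup>+ y. ennreal (g01 y) * indicator {0<..x} y \<partial>lborel)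
      + ennreal (g01 x) * (\<integral>\<^sup>+ y. ennreal (1 / y^2) * indicator {x<..<1} y \<partial>lborel)"
    by (simp add: nn_integral_add nn_integral_cmult)
  also have "(\<integral>\<^sup>+ y. ennreal (g01 y) * indicator {0<..x} y \<partial>lborel) = ennreal (mom2 x / x)"
    using x0 nn_integral_lborel_interval_endpoints(1,3)[of "\<lambda>y. ennreal (g01 y)" 0 x]
    by (simp add: nn_integral_g01_Ioo)
  also have "(\<integral>\<^sup>+ y. ennreal (1 / y^2) * indicator {x<..<1} y \<partial>lborel) = ennreal (1 / x - 1)"
    unfolding nn_integral_lborel_interval_endpoints using x0 by (subst nn_integral_inverse_square) auto
  also have "ennreal (1 / x^2) * ennreal (mom2 x / x) + ennreal (g01 x) * ennreal (1 / x - 1)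
      = ennreal (mom2 x / x^3 + g01 x * (1 / x - 1))"
    using mom2_nonneg[of x] x0 g01_nonneg[of x]
    by (simp add: ennreal_mult[symmetric] ennreal_plus power2_eq_square power3_eq_cube)
  finally show ?thesis .
qed

lemma dens_marginal: "(\<integral>\<^sup>+ y. ennreal (dens (x, y)) \<partial>lborel) + ennreal (g01 x) = ennreal (f01 x)"
proof (cases "x \<in> {0<..<1}")
  case True
  then have x0: "0 < x" "x < 1" by auto
  have "g01 x * (1 / x - 1) + g01 x = g01 x / x" using x0 by (simp add: field_simps)
  also have "\<dots> = f x - mom2 x / x^3"
    using x0 by (simp add: g01_eq field_simps power2_eq_square power3_eq_cube)
  finally have "mom2 x / x^3 + g01 x * (1 / x - 1) + g01 x = f01 x"
    using x0 by (simp add: f01_def)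
  moreover have "0 \<le> mom2 x / x^3 + g01 x * (1 / x - 1)"
    using mom2_nonneg[of x] x0 g01_nonneg[of x] by simp
  ultimately show ?thesis
    using nn_integral_dens_row[OF True] g01_nonneg[of x] by (simp flip: ennreal_plus)
next
  case False
  then have "\<And>y. dens (x, y) = 0" using dens_zero by blast
  then show ?thesis using False by (simp add: g01_zero f01_def)
qed

definition pistar_origin :: "(real \<times> real) measure" where
  "pistar_origin = scale_measure (ennreal F0) (return borel (0, 0))"
definition pistar_interior :: "(real \<times> real) measure" where
  "pistar_interior = density lborel (\<lambda>v. ennreal (dens v))"
definition pistar_right :: "(real \<times> real) measure" where
  "pistar_right = distr (density lborel (\<lambda>y. ennreal (g01 y))) borel (\<lambda>y. (1, y))"
definition pistar_top :: "(real \<times> real) measure" where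
  "pistar_top = distr (density lborel (\<lambda>x. ennreal (g01 x))) borel (\<lambda>x. (x, 1))"
definition pistar_corner :: "(real \<times> real) measure" where
  "pistar_corner = scale_measure (ennreal top_mass) (return borel (1, 1))"

lemma sets_pistar_pieces[simp]:
  "sets pistar_origin = sets borel" "sets pistar_interior = sets borel"
  "sets pistar_right = sets borel" "sets pistar_top = sets borel" "sets pistar_corner = sets borel"
  by (simp_all add: pistar_origin_def pistar_interior_def pistar_right_def pistar_top_def pistar_corner_def)

lemma emeasure_pistar_pieces:
  assumes A: "A \<in> sets borel"
  shows "emeasure pistar_origin A = ennreal F0 * indicator A (0, 0)"
    and "emeasure pistar_interior A = (\<integral>\<^sup>+ v. indicator A v * ennreal (dens v) \<partial>lborel)"
    and "emeasure pistar_right A = (\<integral>\<^sup>+ y. indicator A (1, y) * indicator {0<..<1} y * ennreal (gstar f y) \<partial>lborel)"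
    and "emeasure pistar_top A = (\<integral>\<^sup>+ x. indicator A (x, 1) * indicator {0<..<1} x * ennreal (gstar f x) \<partial>lborel)"
    and "emeasure pistar_corner A = ennreal top_mass * indicator A (1, 1)"
proof -
  have g: "ennreal (g01 y) * indicator B y = indicator B y * indicator {0<..<1} y * ennreal (gstar f y)" for B y
    by (auto simp: g01_def indicator_def)
  have pre: "(\<lambda>y. (1::real, y)) -` A \<in> sets borel" "(\<lambda>x. (x, 1::real)) -` A \<in> sets borel"
    using measurable_sets[OF measurable_Pair_real(1) A] measurable_sets[OF measurable_Pair_real(2) A] by simp_all
  show "emeasure pistar_origin A = ennreal F0 * indicator A (0, 0)"
    "emeasure pistar_corner A = ennreal top_mass * indicator A (1, 1)"
    "emeasure pistar_interior A = (\<integral>\<^sup>+ v. indicator A v * ennreal (dens v) \<partial>lborel)"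
    using A by (simp_all add: pistar_origin_def pistar_corner_def pistar_interior_def emeasure_density mult.commute)
  show "emeasure pistar_right A = (\<integral>\<^sup>+ y. indicator A (1, y) * indicator {0<..<1} y * ennreal (gstar f y) \<partial>lborel)"
    using A pre by (simp add: pistar_right_def emeasure_distr emeasure_density g) (simp add: indicator_def)
  show "emeasure pistar_top A = (\<integral>\<^sup>+ x. indicator A (x, 1) * indicator {0<..<1} x * ennreal (gstar f x) \<partial>lborel)"
    using A pre by (simp add: pistar_top_def emeasure_distr emeasure_density g) (simp add: indicator_def)
qed

lemma pistar_eq_add_measure:
  "pistar F f = add_measure (add_measure (add_measure (add_measure
     pistar_origin pistar_interior) pistar_right) pistar_top) pistar_corner"
proof -
  let ?S = "add_measure (add_measure (add_measure pistar_origin pistar_interior) pistar_right) pistar_top"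
  have "add_measure ?S pistar_corner = measure_of UNIV (sets borel) (\<lambda>A. emeasure ?S A + emeasure pistar_corner A)"
    unfolding add_measure_def[of ?S] by (simp add: pistar_origin_def space_scale_measure)
  also have "\<dots> = pistar F f"
    unfolding pistar_def
  proof (rule measure_of_eq)
    fix A assume "A \<in> sigma_sets UNIV (sets (borel :: (real \<times> real) measure))"
    then have "A \<in> sets borel" by (metis sets.sigma_sets_eq space_borel)
    then show "emeasure ?S A + emeasure pistar_corner A =
      ennreal (measure F {0}) * indicator A (0, 0)
        + (\<integral>\<^sup>+ v. indicator A v * ennreal (pistar_dens f v) \<partial>lborel)
        + (\<integral>\<^sup>+ y. indicator A (1, y) * indicator {0<..<1} y * ennreal (gstar f y) \<partial>lborel)
        + (\<integral>\<^sup>+ x. indicator A (x, 1) * indicator {0<..<1} x * ennreal (gstar f x) \<partial>lborel)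
        + ennreal (measure F {1} - (LINT s:{0<..<1}|lborel. s^2 * f s)) * indicator A (1, 1)"
      by (simp add: emeasure_add_measure emeasure_pistar_pieces top_mass_def mom2_def)
  qed simp
  finally show ?thesis ..
qed

lemma sets_pistar[simp]: "sets (pistar F f) = sets borel"
  by (simp add: pistar_eq_add_measure)

lemma nn_integral_pistar:
  assumes h[measurable]: "h \<in> borel_measurable borel"
  shows "(\<integral>\<^sup>+ v. h v \<partial>pistar F f) = ennreal F0 * h (0, 0) + (\<integral>\<^sup>+ v. ennreal (dens v) * h v \<partial>lborel)
    + (\<integral>\<^sup>+ y. ennreal (g01 y) * h (1, y) \<partial>lborel) + (\<integral>\<^sup>+ x. ennreal (g01 x) * h (x, 1) \<partial>lborel)
    + ennreal top_mass * h (1, 1)"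
  by (simp add: pistar_eq_add_measure nn_integral_add_measure cong: measurable_cong_sets)
    (simp add: pistar_origin_def pistar_interior_def pistar_right_def pistar_top_def pistar_corner_def
      nn_integral_scale_measure nn_integral_return nn_integral_density nn_integral_distr)

lemma nn_integral_dens_swap:
  assumes h[measurable]: "h \<in> borel_measurable borel"
  shows "(\<integral>\<^sup>+ v. ennreal (dens v) * h (prod.swap v) \<partial>lborel) = (\<integral>\<^sup>+ v. ennreal (dens v) * h v \<partial>lborel)"
proof -
  have h2[measurable]: "h \<in> borel_measurable (lborel \<Otimes>\<^sub>M lborel)" by (simp add: lborel_prod)
  have "(\<lambda>(x, y). h (y, x)) \<in> borel_measurable (lborel \<Otimes>\<^sub>M lborel)"
    using measurable_pair_swap[OF h2] by simp
  then have [measurable]: "(\<lambda>v. h (prod.swap v)) \<in> borel_measurable (lborel \<Otimes>\<^sub>M lborel)"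
    by (simp add: case_prod_beta prod.swap_def)
  have "(\<integral>\<^sup>+ v. ennreal (dens v) * h (prod.swap v) \<partial>lborel)
      = (\<integral>\<^sup>+ x. (\<integral>\<^sup>+ y. ennreal (dens (y, x)) * h (y, x) \<partial>lborel) \<partial>lborel)"
    by (subst nn_integral_lborel2_fst) (auto simp: dens_swap)
  also have "\<dots> = (\<integral>\<^sup>+ v. ennreal (dens v) * h v \<partial>lborel)"
    by (subst nn_integral_lborel2_snd[of "\<lambda>v. ennreal (dens v) * h v"]) auto
  finally show ?thesis .
qed

lemma nn_integral_pistar_swap:
  assumes h[measurable]: "h \<in> borel_measurable borel"
  shows "(\<integral>\<^sup>+ v. h (prod.swap v) \<partial>pistar F f) = (\<integral>\<^sup>+ v. h v \<partial>pistar F f)"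
proof -
  have "(\<lambda>v. h (prod.swap v)) \<in> borel_measurable (borel \<Otimes>\<^sub>M borel)"
    using measurable_pair_swap[of h borel borel] h by (simp add: borel_prod case_prod_beta prod.swap_def)
  then have hs: "(\<lambda>v. h (prod.swap v)) \<in> borel_measurable borel" by (simp add: borel_prod)
  show ?thesis
    unfolding nn_integral_pistar[OF hs] nn_integral_pistar[OF h] nn_integral_dens_swap[OF h]
    by (simp add: add_ac)
qed

lemma nn_integral_pistar_fst:
  assumes h[measurable]: "h \<in> borel_measurable borel"
  shows "(\<integral>\<^sup>+ v. h (fst v) \<partial>pistar F f) = (\<integral>\<^sup>+ x. h x \<partial>F)"
proof -
  define R where "R x = (\<integral>\<^sup>+ y. ennreal (dens (x, y)) \<partial>lborel)" for x
  have [measurable]: "R \<in> borel_measurable borel"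
    unfolding R_def by (rule borel_measurable_nn_integral_lborel2_fst) measurable
  have "(\<integral>\<^sup>+ v. ennreal (dens v) * h (fst v) \<partial>lborel) = (\<integral>\<^sup>+ x. (\<integral>\<^sup>+ y. h x * ennreal (dens (x, y)) \<partial>lborel) \<partial>lborel)"
    by (subst nn_integral_lborel2_fst) (auto simp: mult.commute)
  also have "\<dots> = (\<integral>\<^sup>+ x. h x * R x \<partial>lborel)"
    unfolding R_def by (intro nn_integral_cong nn_integral_cmult) measurable
  finally have R: "(\<integral>\<^sup>+ v. ennreal (dens v) * h (fst v) \<partial>lborel) = (\<integral>\<^sup>+ x. h x * R x \<partial>lborel)" .
  have G: "(\<integral>\<^sup>+ y. ennreal (g01 y) * h 1 \<partial>lborel) = ennreal (mom2 1) * h 1"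
    by (simp add: nn_integral_multc nn_integral_g01)
  have "(\<integral>\<^sup>+ v. h (fst v) \<partial>pistar F f) = ennreal F0 * h 0 + (\<integral>\<^sup>+ v. ennreal (dens v) * h (fst v) \<partial>lborel)
      + (\<integral>\<^sup>+ y. ennreal (g01 y) * h 1 \<partial>lborel) + (\<integral>\<^sup>+ x. ennreal (g01 x) * h x \<partial>lborel)
      + ennreal top_mass * h 1"
    using nn_integral_pistar[of "\<lambda>v. h (fst v)"] by simp
  also have "\<dots> = ennreal F0 * h 0
      + ((\<integral>\<^sup>+ x. h x * R x \<partial>lborel) + (\<integral>\<^sup>+ x. ennreal (g01 x) * h x \<partial>lborel))
      + (ennreal (mom2 1) + ennreal top_mass) * h 1"
    unfolding R G by (simp add: algebra_simps)
  also have "(\<integral>\<^sup>+ x. h x * R x \<partial>lborel) + (\<integral>\<^sup>+ x. ennreal (g01 x) * h x \<partial>lborel)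
      = (\<integral>\<^sup>+ x. ennreal (f01 x) * h x \<partial>lborel)"
    unfolding dens_marginal[symmetric] R_def
    by (subst nn_integral_add[symmetric]) (auto simp: distrib_left mult.commute)
  finally show ?thesis by (simp add: ennreal_mom2_top_mass nn_integral_F)
qed

lemma emeasure_pistar_vimage:
  assumes A: "A \<in> sets borel"
  shows "emeasure (pistar F f) (fst -` A) = emeasure F A" and "emeasure (pistar F f) (snd -` A) = emeasure F A"
proof -
  have [measurable]: "A \<in> sets borel" by fact
  have "emeasure (pistar F f) (fst -` A) = (\<integral>\<^sup>+ v. indicator A (fst v) \<partial>pistar F f)"
    using measurable_sets[OF measurable_Pair_real(3) A] by (simp flip: indicator_vimage)
  also have "\<dots> = emeasure F A"
    using A F_sets by (simp add: nn_integral_pistar_fst)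
  finally show "emeasure (pistar F f) (fst -` A) = emeasure F A" .
  have "emeasure (pistar F f) (snd -` A) = (\<integral>\<^sup>+ v. indicator A (fst (prod.swap v)) \<partial>pistar F f)"
    using measurable_sets[OF measurable_Pair_real(4) A] by (simp flip: indicator_vimage)
  also have "\<dots> = (\<integral>\<^sup>+ v. indicator A (fst v) \<partial>pistar F f)"
    by (rule nn_integral_pistar_swap) measurable
  also have "\<dots> = emeasure F A"
    using A F_sets by (simp add: nn_integral_pistar_fst)
  finally show "emeasure (pistar F f) (snd -` A) = emeasure F A" .
qed

lemma pistar_in_PiF: "pistar F f \<in> PiF F"
proof -
  have F_space: "space F = UNIV" using sets_eq_imp_space_eq[OF F_sets] by simp
  have space: "space (pistar F f) = UNIV" using sets_eq_imp_space_eq[OF sets_pistar] by simp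
  have [measurable]: "fst \<in> borel_measurable (pistar F f)" "snd \<in> borel_measurable (pistar F f)"
    by (simp_all cong: measurable_cong_sets)
  have distr: "distr (pistar F f) borel p = F" if p: "p = fst \<or> p = snd" for p :: "real \<times> real \<Rightarrow> real"
  proof (rule measure_eqI)
    fix A assume "A \<in> sets (distr (pistar F f) borel p)"
    then have A: "A \<in> sets borel" by simp
    have "emeasure (distr (pistar F f) borel p) A = emeasure (pistar F f) (p -` A)"
      using A p by (subst emeasure_distr) (auto simp: space)
    then show "emeasure (distr (pistar F f) borel p) A = emeasure F A"
      using emeasure_pistar_vimage[OF A] p by auto
  qed (use F_sets in simp)
  have "prob_space (pistar F f)"
  proof
    show "emeasure (pistar F f) (space (pistar F f)) = 1"
      using emeasure_pistar_vimage(1)[of UNIV] F.emeasure_space_1 F_space by (simp add: space)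
  qed
  then show ?thesis unfolding PiF_def using distr by auto
qed

lemma second_moment_F: "(\<integral>x. x^2 \<partial>F) = F1 + mom2 1"
proof -
  have "(\<integral>\<^sup>+ x. ennreal (f01 x) * ennreal (x^2) \<partial>lborel) = mom2_nn 1"
    unfolding mom2_nn_def
    by (rule nn_integral_cong) (auto simp: f01_def indicator_def ennreal_mult'[symmetric] mult.commute)
  then have "(\<integral>\<^sup>+ x. ennreal (x^2) \<partial>F) = ennreal (mom2 1) + ennreal F1"
    by (subst nn_integral_F) (auto simp: mom2_nn_eq)
  then have "(\<integral>x. x^2 \<partial>F) = enn2real (ennreal (mom2 1) + ennreal F1)"
    using F_sets by (subst integral_eq_nn_integral) (auto cong: measurable_cong_sets)
  also have "\<dots> = mom2 1 + F1" using mom2_nonneg[of 1] by (simp flip: ennreal_plus)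
  finally show ?thesis by simp
qed

section \<open>Revenue under the adversarial correlation structure\<close>

lemma dens_hazard_below:
  assumes y: "0 < y" and s: "y \<le> s" "s < 1"
  shows "ennreal (s * dens (s, y)) = (\<integral>\<^sup>+ x. ennreal (dens (x, y)) * indicator {s..<1} x \<partial>lborel) + ennreal (g01 y)"
proof -
  have "(\<integral>\<^sup>+ x. ennreal (dens (x, y)) * indicator {s..<1} x \<partial>lborel)
      = (\<integral>\<^sup>+ x. ennreal (g01 y) * (ennreal (1 / x^2) * indicator {s..<1} x) \<partial>lborel)"
    using y s g01_nonneg[of y]
    by (intro nn_integral_cong) (auto simp: dens_eq indicator_def ennreal_mult'[symmetric])
  also have "\<dots> = ennreal (g01 y) * ennreal (1 / s - 1)"
    using y s by (simp add: nn_integral_cmult nn_integral_lborel_interval_endpoints nn_integral_inverse_square)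
  also have "\<dots> + ennreal (g01 y) = ennreal (g01 y * (1 / s - 1) + g01 y)"
    using y s g01_nonneg[of y] by (simp add: ennreal_mult'[symmetric] ennreal_plus)
  also have "g01 y * (1 / s - 1) + g01 y = s * dens (s, y)"
    using y s by (simp add: dens_eq field_simps power2_eq_square)
  finally show ?thesis ..
qed

lemma dens_hazard_above:
  assumes s: "0 < s" "s < y" and y: "y < 1"
  shows "ennreal (s * dens (s, y)) \<le> (\<integral>\<^sup>+ x. ennreal (dens (x, y)) * indicator {s..<1} x \<partial>lborel) + ennreal (g01 y)"
proof -
  have "(\<integral>\<^sup>+ x. ennreal (dens (x, y)) * indicator {s..<1} x \<partial>lborel)
      = (\<integral>\<^sup>+ x. ennreal (1 / y^2) * (ennreal (g01 x) * indicator {s..<y} x)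
           + ennreal (g01 y) * (ennreal (1 / x^2) * indicator {y..<1} x) \<partial>lborel)"
    using s y g01_nonneg
    by (intro nn_integral_cong) (auto simp: dens_eq indicator_def ennreal_mult'[symmetric] mult.commute)
  also have "\<dots> = ennreal (1 / y^2) * ennreal (mom2 y / y - mom2 s / s) + ennreal (g01 y) * ennreal (1 / y - 1)"
    using s y nn_integral_g01_Ico(1)[of s y]
      nn_integral_lborel_interval_endpoints(2)[of "\<lambda>x. ennreal (1 / x^2)" y 1]
    by (simp add: nn_integral_add nn_integral_cmult nn_integral_inverse_square)
  finally have I: "(\<integral>\<^sup>+ x. ennreal (dens (x, y)) * indicator {s..<1} x \<partial>lborel) + ennreal (g01 y)
      = ennreal ((1 / y^2) * (mom2 y / y - mom2 s / s) + g01 y * (1 / y - 1) + g01 y)"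
    using s y nn_integral_g01_Ico(2)[of s y] g01_nonneg[of y]
    by (simp add: ennreal_mult'[symmetric] ennreal_plus)
  have "s * dens (s, y) = s^2 * f s / y^2 - mom2 s / (s * y^2)"
    using s y by (simp add: dens_eq g01_eq field_simps power2_eq_square)
  also have "\<dots> \<le> y^2 * f y / y^2 - mom2 s / (s * y^2)"
    using reg1 s y by (intro diff_right_mono divide_right_mono) (auto intro: mono_onD)
  also have "\<dots> = (1 / y^2) * (mom2 y / y - mom2 s / s) + g01 y * (1 / y - 1) + g01 y"
    using s y by (simp add: g01_eq field_simps power2_eq_square)
  finally show ?thesis unfolding I by (rule ennreal_leI)
qed

lemma dens_column_hazard:
  assumes "y \<in> {0<..<1}" "s \<in> {0<..<1}"
  shows "ennreal (s * dens (s, y)) \<le> (\<integral>\<^sup>+ x. ennreal (dens (x, y)) * indicator {s..<1} x \<partial>lborel) + ennreal (g01 y)"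
  using assms dens_hazard_below[of y s] dens_hazard_above[of s y] by (cases "y \<le> s") auto

lemma dens_column_slice_bound:
  assumes d: "ic_ir_schedule Q H" and y: "y \<in> {0<..<1}"
  shows "(\<integral>\<^sup>+ x. ennreal (dens (x, y)) \<partial>lborel) + ennreal (g01 y)
    \<le> (\<integral>\<^sup>+ x. ennreal (dens (x, y)) * ennreal (1 - H x) \<partial>lborel)
      + ennreal (g01 y) * ennreal (1 - H 1) + ennreal (g01 y) * ennreal (Q 1)"
proof -
  have [measurable]: "(\<lambda>x. dens (x, y)) \<in> borel_measurable borel" by measurable
  have "(\<integral>\<^sup>+ x. ennreal (dens (x, y)) * g x * indicator {0<..<1} x \<partial>lborel)
      = (\<integral>\<^sup>+ x. ennreal (dens (x, y)) * g x \<partial>lborel)" for g :: "real \<Rightarrow> ennreal"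
    by (auto intro!: nn_integral_cong simp: indicator_def dens_zero)
  from this[of "\<lambda>_. 1"] this[of "\<lambda>x. ennreal (1 - H x)"] show ?thesis
    using ic_ir_schedule_slice_bound[OF d, of "\<lambda>x. dens (x, y)" "g01 y"] dens_column_hazard[OF y]
    by (simp add: dens_nonneg g01_nonneg)
qed

lemma column_slice_bound:
  assumes mech: "DSIC_EPIR_mechanism q t"
    and Tm: "(\<lambda>v. fst (t v) + snd (t v)) \<in> borel_measurable borel"
  obtains H where "H \<in> borel_measurable borel"
    and "\<And>x y. x \<in> {0..1} \<Longrightarrow> y \<in> {0..1} \<Longrightarrow> fst (t (x, y)) \<le> H (x, y) \<and> H (x, y) \<le> 1"
    and "(\<integral>\<^sup>+ v. ennreal (dens v) \<partial>lborel) + ennreal (mom2 1)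
      \<le> (\<integral>\<^sup>+ v. ennreal (dens v) * ennreal (1 - H v) \<partial>lborel)
        + (\<integral>\<^sup>+ y. ennreal (g01 y) * ennreal (1 - fst (t (1, clamp 0 1 y))) \<partial>lborel)
        + (\<integral>\<^sup>+ y. ennreal (g01 y) * ennreal (1 - snd (q (1, clamp 0 1 y))) \<partial>lborel)"
proof -
  note d1 = DSIC_EPIR_mechanism_ic_ir_schedule(1)[OF mech]
  note sections = DSIC_EPIR_mechanism_measurable_sections[OF mech Tm]
  obtain Hr Qr where Hm: "(\<lambda>p. Hr (fst p) (snd p)) \<in> borel_measurable borel"
    and Hd: "\<And>y. y \<in> {0..1} \<Longrightarrow> ic_ir_schedule (\<lambda>x. Qr x y) (\<lambda>x. Hr x y)"
    and Hge: "\<And>x y. x \<in> {0..1} \<Longrightarrow> y \<in> {0..1} \<Longrightarrow> fst (t (x, y)) \<le> Hr x y"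
    and Hone: "\<And>y. y \<in> {0..1} \<Longrightarrow> Hr 1 y = fst (t (1, y)) \<and> Qr 1 y = fst (q (1, y))"
    using ic_ir_schedule_regularization[of "\<lambda>x y. fst (q (x, y))" "\<lambda>x y. fst (t (x, y))", OF d1 sections(5)]
    by blast
  define H where "H = (\<lambda>p. Hr (fst p) (snd p))"
  have [measurable]: "H \<in> borel_measurable borel" "H \<in> borel_measurable (lborel \<Otimes>\<^sub>M lborel)"
    using Hm by (simp_all add: H_def lborel_prod)
  have [measurable]: "(\<lambda>y. fst (t (1, clamp 0 1 y))) \<in> borel_measurable borel"
    "(\<lambda>y. snd (q (1, clamp 0 1 y))) \<in> borel_measurable borel"
    using sections(2,5)[of 1] by auto
  define C where "C y = (\<integral>\<^sup>+ x. ennreal (dens (x, y)) * ennreal (1 - H (x, y)) \<partial>lborel)" for y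
  have slice: "(\<integral>\<^sup>+ x. ennreal (dens (x, y)) \<partial>lborel) + ennreal (g01 y)
      \<le> C y + ennreal (g01 y) * ennreal (1 - fst (t (1, clamp 0 1 y)))
        + ennreal (g01 y) * ennreal (1 - snd (q (1, clamp 0 1 y)))" for y
  proof (cases "y \<in> {0<..<1}")
    case True
    then have y: "y \<in> {0..1}" by auto
    have "Hr 1 y = fst (t (1, clamp 0 1 y))" using Hone[OF y] y by simp
    then have "(\<integral>\<^sup>+ x. ennreal (dens (x, y)) \<partial>lborel) + ennreal (g01 y)
      \<le> C y + ennreal (g01 y) * ennreal (1 - fst (t (1, clamp 0 1 y))) + ennreal (g01 y) * ennreal (Qr 1 y)"
      using dens_column_slice_bound[OF Hd[OF y] True] by (simp add: C_def H_def)
    also have "ennreal (g01 y) * ennreal (Qr 1 y) \<le> ennreal (g01 y) * ennreal (1 - snd (q (1, clamp 0 1 y)))"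
      using Hone[OF y] DSIC_EPIR_mechanism_feasible[OF mech, of 1 y] y
      by (intro mult_left_mono ennreal_leI) auto
    finally show ?thesis by (simp add: add_left_mono)
  next
    case False
    then show ?thesis using dens_zero g01_zero by (simp add: C_def)
  qed
  have [measurable]: "C \<in> borel_measurable borel" "(\<lambda>y. \<integral>\<^sup>+ x. ennreal (dens (x, y)) \<partial>lborel) \<in> borel_measurable borel"
    unfolding C_def by (auto intro!: borel_measurable_nn_integral_lborel2_snd)
  have "(\<integral>\<^sup>+ v. ennreal (dens v) \<partial>lborel) + ennreal (mom2 1)
      = (\<integral>\<^sup>+ y. (\<integral>\<^sup>+ x. ennreal (dens (x, y)) \<partial>lborel) + ennreal (g01 y) \<partial>lborel)"
    by (simp add: nn_integral_add nn_integral_g01 nn_integral_lborel2_snd[of "\<lambda>v. ennreal (dens v)"])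
  also have "\<dots> \<le> (\<integral>\<^sup>+ y. C y + ennreal (g01 y) * ennreal (1 - fst (t (1, clamp 0 1 y)))
        + ennreal (g01 y) * ennreal (1 - snd (q (1, clamp 0 1 y))) \<partial>lborel)"
    by (rule nn_integral_mono) (rule slice)
  also have "\<dots> = (\<integral>\<^sup>+ v. ennreal (dens v) * ennreal (1 - H v) \<partial>lborel)
        + (\<integral>\<^sup>+ y. ennreal (g01 y) * ennreal (1 - fst (t (1, clamp 0 1 y))) \<partial>lborel)
        + (\<integral>\<^sup>+ y. ennreal (g01 y) * ennreal (1 - snd (q (1, clamp 0 1 y))) \<partial>lborel)"
    unfolding C_def by (simp add: nn_integral_add nn_integral_lborel2_snd[of "\<lambda>v. ennreal (dens v) * ennreal (1 - H v)"])
  finally have bound: "(\<integral>\<^sup>+ v. ennreal (dens v) \<partial>lborel) + ennreal (mom2 1)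
      \<le> (\<integral>\<^sup>+ v. ennreal (dens v) * ennreal (1 - H v) \<partial>lborel)
        + (\<integral>\<^sup>+ y. ennreal (g01 y) * ennreal (1 - fst (t (1, clamp 0 1 y))) \<partial>lborel)
        + (\<integral>\<^sup>+ y. ennreal (g01 y) * ennreal (1 - snd (q (1, clamp 0 1 y))) \<partial>lborel)" .
  have "fst (t (x, y)) \<le> H (x, y) \<and> H (x, y) \<le> 1" if "x \<in> {0..1}" "y \<in> {0..1}" for x y
    using Hge[OF that] ic_ir_schedule_payment_le(2)[OF Hd[OF that(2)] that(1)] by (simp add: H_def)
  then show ?thesis using \<open>H \<in> borel_measurable borel\<close> bound by (intro that)
qed

text \<open>Bidder 2 is bidder 1 of the mirrored mechanism, and \<open>\<pi>\<^sup>*\<close> is symmetric.\<close>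
lemma row_slice_bound:
  assumes mech: "DSIC_EPIR_mechanism q t"
    and Tm: "(\<lambda>v. fst (t v) + snd (t v)) \<in> borel_measurable borel"
  obtains H where "H \<in> borel_measurable borel"
    and "\<And>x y. x \<in> {0..1} \<Longrightarrow> y \<in> {0..1} \<Longrightarrow> snd (t (x, y)) \<le> H (x, y) \<and> H (x, y) \<le> 1"
    and "(\<integral>\<^sup>+ v. ennreal (dens v) \<partial>lborel) + ennreal (mom2 1)
      \<le> (\<integral>\<^sup>+ v. ennreal (dens v) * ennreal (1 - H v) \<partial>lborel)
        + (\<integral>\<^sup>+ x. ennreal (g01 x) * ennreal (1 - snd (t (clamp 0 1 x, 1))) \<partial>lborel)
        + (\<integral>\<^sup>+ x. ennreal (g01 x) * ennreal (1 - fst (q (clamp 0 1 x, 1))) \<partial>lborel)"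
proof -
  have "(\<lambda>v. fst (mirror t v) + snd (mirror t v)) \<in> borel_measurable borel"
    using measurable_compose[OF measurable_swap_real Tm] by (simp add: mirror_def add.commute)
  then obtain H' where H'm[measurable]: "H' \<in> borel_measurable borel"
    and H': "\<And>x y. x \<in> {0..1} \<Longrightarrow> y \<in> {0..1} \<Longrightarrow> snd (t (y, x)) \<le> H' (x, y) \<and> H' (x, y) \<le> 1"
    and col: "(\<integral>\<^sup>+ v. ennreal (dens v) \<partial>lborel) + ennreal (mom2 1)
      \<le> (\<integral>\<^sup>+ v. ennreal (dens v) * ennreal (1 - H' v) \<partial>lborel)
        + (\<integral>\<^sup>+ x. ennreal (g01 x) * ennreal (1 - snd (t (clamp 0 1 x, 1))) \<partial>lborel)
        + (\<integral>\<^sup>+ x. ennreal (g01 x) * ennreal (1 - fst (q (clamp 0 1 x, 1))) \<partial>lborel)"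
    using column_slice_bound[OF DSIC_EPIR_mechanism_mirror[OF mech]] by (auto simp: mirror_def)
  define H where "H v = H' (prod.swap v)" for v
  have "H \<in> borel_measurable borel"
    unfolding H_def[abs_def] by (rule measurable_compose[OF measurable_swap_real H'm])
  moreover have "snd (t (x, y)) \<le> H (x, y) \<and> H (x, y) \<le> 1" if "x \<in> {0..1}" "y \<in> {0..1}" for x y
    using H'[OF that(2,1)] by (simp add: H_def)
  moreover have "(\<integral>\<^sup>+ v. ennreal (dens v) * ennreal (1 - H' v) \<partial>lborel)
      = (\<integral>\<^sup>+ v. ennreal (dens v) * ennreal (1 - H v) \<partial>lborel)"
    using nn_integral_dens_swap[of "\<lambda>v. ennreal (1 - H' v)"] by (simp add: H_def)
  ultimately show ?thesis using col that by simp
qed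

lemma nn_integral_g01_split:
  assumes [measurable]: "(\<lambda>y. a (clamp 0 1 y)) \<in> borel_measurable borel"
      "(\<lambda>y. b (clamp 0 1 y)) \<in> borel_measurable borel"
    and ab: "\<And>y. y \<in> {0..1} \<Longrightarrow> a y \<le> 1 \<and> b y \<le> 1"
  shows "(\<integral>\<^sup>+ y. ennreal (g01 y) * ennreal (2 - (a y + b y)) \<partial>lborel)
    = (\<integral>\<^sup>+ y. ennreal (g01 y) * ennreal (1 - a (clamp 0 1 y)) \<partial>lborel)
      + (\<integral>\<^sup>+ y. ennreal (g01 y) * ennreal (1 - b (clamp 0 1 y)) \<partial>lborel)"
proof -
  have "ennreal (g01 y) * ennreal (2 - (a y + b y))
      = ennreal (g01 y) * ennreal (1 - a (clamp 0 1 y)) + ennreal (g01 y) * ennreal (1 - b (clamp 0 1 y))" for y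
  proof (cases "y \<in> {0<..<1}")
    case True
    then have "ennreal (2 - (a y + b y)) = ennreal (1 - a y) + ennreal (1 - b y)"
      using ab[of y] by (simp flip: ennreal_plus)
    then show ?thesis using True by (simp add: distrib_left)
  qed (simp add: g01_zero)
  then show ?thesis by (simp add: nn_integral_add)
qed

lemma nn_integral_pistar_slack_ge:
  assumes mech: "DSIC_EPIR_mechanism q t"
    and Tm[measurable]: "(\<lambda>v. fst (t v) + snd (t v)) \<in> borel_measurable borel"
    and H1m[measurable]: "H1 \<in> borel_measurable borel" and H2m[measurable]: "H2 \<in> borel_measurable borel"
    and H: "\<And>x y. x \<in> {0..1} \<Longrightarrow> y \<in> {0..1} \<Longrightarrow>
      fst (t (x, y)) \<le> H1 (x, y) \<and> snd (t (x, y)) \<le> H2 (x, y) \<and> H1 (x, y) \<le> 1 \<and> H2 (x, y) \<le> 1"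
  shows "ennreal F0 * 2
      + ((\<integral>\<^sup>+ v. ennreal (dens v) * ennreal (1 - H1 v) \<partial>lborel) + (\<integral>\<^sup>+ v. ennreal (dens v) * ennreal (1 - H2 v) \<partial>lborel))
      + ((\<integral>\<^sup>+ y. ennreal (g01 y) * ennreal (1 - fst (t (1, clamp 0 1 y))) \<partial>lborel)
        + (\<integral>\<^sup>+ y. ennreal (g01 y) * ennreal (1 - snd (t (1, clamp 0 1 y))) \<partial>lborel))
      + ((\<integral>\<^sup>+ x. ennreal (g01 x) * ennreal (1 - fst (t (clamp 0 1 x, 1))) \<partial>lborel)
        + (\<integral>\<^sup>+ x. ennreal (g01 x) * ennreal (1 - snd (t (clamp 0 1 x, 1))) \<partial>lborel))
      + (ennreal top_mass * ennreal (1 - fst (t (1, 1))) + ennreal top_mass * ennreal (1 - snd (t (1, 1))))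
    \<le> (\<integral>\<^sup>+ v. ennreal (2 - (fst (t v) + snd (t v))) \<partial>pistar F f)"
proof -
  define T where "T v = fst (t v) + snd (t v)" for v
  have [measurable]: "T \<in> borel_measurable borel" using Tm by (simp add: T_def[abs_def])
  note d1 = DSIC_EPIR_mechanism_ic_ir_schedule(1)[OF mech]
  note d2 = DSIC_EPIR_mechanism_ic_ir_schedule(2)[OF mech]
  have tle: "fst (t (x, y)) \<le> 1" "snd (t (x, y)) \<le> 1" if "x \<in> {0..1}" "y \<in> {0..1}" for x y
    using ic_ir_schedule_payment_le(2)[OF d1[OF that(2)] that(1)]
      ic_ir_schedule_payment_le(2)[OF d2[OF that(1)] that(2)] by auto
  have split: "ennreal (2 - T (x, y)) = ennreal (1 - fst (t (x, y))) + ennreal (1 - snd (t (x, y)))"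
    if "x \<in> {0..1}" "y \<in> {0..1}" for x y
    using tle[OF that] by (simp add: T_def flip: ennreal_plus)
  have sec: "(\<lambda>y. fst (t (1, clamp 0 1 y))) \<in> borel_measurable borel"
    "(\<lambda>y. snd (t (1, clamp 0 1 y))) \<in> borel_measurable borel"
    "(\<lambda>x. fst (t (clamp 0 1 x, 1))) \<in> borel_measurable borel"
    "(\<lambda>x. snd (t (clamp 0 1 x, 1))) \<in> borel_measurable borel"
    using DSIC_EPIR_mechanism_measurable_sections[OF mech Tm, of 1] by auto
  have origin: "ennreal F0 * 2 \<le> ennreal F0 * ennreal (2 - T (0, 0))"
    using ic_ir_scheduleD(2)[OF d1, of 0 0 0] ic_ir_scheduleD(2)[OF d2, of 0 0 0]
    by (intro mult_left_mono) (auto simp: T_def ennreal_leI[of 2, simplified])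
  have interior: "(\<integral>\<^sup>+ v. ennreal (dens v) * ennreal (1 - H1 v) \<partial>lborel) + (\<integral>\<^sup>+ v. ennreal (dens v) * ennreal (1 - H2 v) \<partial>lborel)
      \<le> (\<integral>\<^sup>+ v. ennreal (dens v) * ennreal (2 - T v) \<partial>lborel)"
  proof -
    have "ennreal (dens v) * ennreal (1 - H1 v) + ennreal (dens v) * ennreal (1 - H2 v)
        \<le> ennreal (dens v) * ennreal (2 - T v)" for v
    proof (cases "fst v \<in> {0<..<1} \<and> snd v \<in> {0<..<1}")
      case True
      then have "fst v \<in> {0..1}" "snd v \<in> {0..1}" by auto
      from H[OF this] have "ennreal (1 - H1 v) + ennreal (1 - H2 v) \<le> ennreal (2 - T v)"
        by (simp add: T_def ennreal_leI flip: ennreal_plus)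
      then show ?thesis by (simp add: mult_left_mono flip: distrib_left)
    next
      case False
      then have "dens v = 0" using dens_zero[of "fst v" "snd v"] by simp
      then show ?thesis by simp
    qed
    then show ?thesis
      by (subst nn_integral_add[symmetric]) (auto intro!: nn_integral_mono)
  qed
  have edge_right: "(\<integral>\<^sup>+ y. ennreal (g01 y) * ennreal (2 - T (1, y)) \<partial>lborel)
      = (\<integral>\<^sup>+ y. ennreal (g01 y) * ennreal (1 - fst (t (1, clamp 0 1 y))) \<partial>lborel)
        + (\<integral>\<^sup>+ y. ennreal (g01 y) * ennreal (1 - snd (t (1, clamp 0 1 y))) \<partial>lborel)"
    unfolding T_def by (rule nn_integral_g01_split[OF sec(1,2)]) (use tle in auto)
  have edge_top: "(\<integral>\<^sup>+ x. ennreal (g01 x) * ennreal (2 - T (x, 1)) \<partial>lborel)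
      = (\<integral>\<^sup>+ x. ennreal (g01 x) * ennreal (1 - fst (t (clamp 0 1 x, 1))) \<partial>lborel)
        + (\<integral>\<^sup>+ x. ennreal (g01 x) * ennreal (1 - snd (t (clamp 0 1 x, 1))) \<partial>lborel)"
    unfolding T_def by (rule nn_integral_g01_split[OF sec(3,4)]) (use tle in auto)
  have "ennreal top_mass * ennreal (2 - T (1, 1))
      = ennreal top_mass * ennreal (1 - fst (t (1, 1))) + ennreal top_mass * ennreal (1 - snd (t (1, 1)))"
    by (simp add: split distrib_left)
  then show ?thesis
    using origin interior unfolding T_def[symmetric]
    by (subst nn_integral_pistar) (auto simp: edge_right edge_top intro!: add_mono)
qed

lemma pistar_slack_bound:
  assumes mech: "DSIC_EPIR_mechanism q t"
    and Tm[measurable]: "(\<lambda>v. fst (t v) + snd (t v)) \<in> borel_measurable borel"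
  shows "2 \<le> (\<integral>\<^sup>+ v. ennreal (2 - (fst (t v) + snd (t v))) \<partial>pistar F f) + ennreal (F1 + mom2 1)"
proof -
  interpret P: prob_space "pistar F f"
    using pistar_in_PiF by (simp add: PiF_def)
  define Dn where "Dn = (\<integral>\<^sup>+ v. ennreal (dens v) \<partial>lborel)"
  define Gt where "Gt = ennreal (mom2 1)"
  define tm where "tm = ennreal top_mass"
  define A where "A H = (\<integral>\<^sup>+ v. ennreal (dens v) * ennreal (1 - H v) \<partial>lborel)" for H :: "real \<times> real \<Rightarrow> real"
  define R where "R u = (\<integral>\<^sup>+ y. ennreal (g01 y) * ennreal (1 - u (1, clamp 0 1 y)) \<partial>lborel)" for u :: "real \<times> real \<Rightarrow> real"
  define U where "U u = (\<integral>\<^sup>+ x. ennreal (g01 x) * ennreal (1 - u (clamp 0 1 x, 1)) \<partial>lborel)" for u :: "real \<times> real \<Rightarrow> real"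
  define K where "K u = tm * ennreal (1 - u (1, 1))" for u :: "real \<times> real \<Rightarrow> real"
  let ?t1 = "\<lambda>v. fst (t v)" and ?t2 = "\<lambda>v. snd (t v)" and ?q1 = "\<lambda>v. fst (q v)" and ?q2 = "\<lambda>v. snd (q v)"
  obtain H1 where [measurable]: "H1 \<in> borel_measurable borel"
    and H1: "\<And>x y. x \<in> {0..1} \<Longrightarrow> y \<in> {0..1} \<Longrightarrow> fst (t (x, y)) \<le> H1 (x, y) \<and> H1 (x, y) \<le> 1"
    and col1: "Dn + Gt \<le> A H1 + R ?t1 + R ?q2"
    using column_slice_bound[OF mech Tm] unfolding Dn_def Gt_def A_def R_def by blast
  obtain H2 where [measurable]: "H2 \<in> borel_measurable borel"
    and H2: "\<And>x y. x \<in> {0..1} \<Longrightarrow> y \<in> {0..1} \<Longrightarrow> snd (t (x, y)) \<le> H2 (x, y) \<and> H2 (x, y) \<le> 1"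
    and col2: "Dn + Gt \<le> A H2 + U ?t2 + U ?q1"
    using row_slice_bound[OF mech Tm] unfolding Dn_def Gt_def A_def U_def by blast
  note d1 = DSIC_EPIR_mechanism_ic_ir_schedule(1)[OF mech]
  note d2 = DSIC_EPIR_mechanism_ic_ir_schedule(2)[OF mech]
  have tq: "fst (t (x, y)) \<le> fst (q (x, y))" "snd (t (x, y)) \<le> snd (q (x, y))"
    if "x \<in> {0..1}" "y \<in> {0..1}" for x y
    using ic_ir_schedule_payment_le(1)[OF d1[OF that(2)] that(1)]
      ic_ir_schedule_payment_le(1)[OF d2[OF that(1)] that(2)] by auto
  have edgeR: "R ?q2 + K ?q2 \<le> R ?t2 + K ?t2" and edgeU: "U ?q1 + K ?q1 \<le> U ?t1 + K ?t1"
    unfolding R_def U_def K_def using tq clamp01_in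
    by (auto intro!: add_mono nn_integral_mono mult_left_mono ennreal_leI)
  have corner: "tm \<le> K ?q1 + K ?q2"
  proof -
    have "ennreal 1 \<le> ennreal (1 - fst (q (1, 1))) + ennreal (1 - snd (q (1, 1)))"
      using DSIC_EPIR_mechanism_feasible[OF mech, of 1 1] by (auto simp flip: ennreal_plus intro!: ennreal_leI)
    then have "tm * 1 \<le> tm * (ennreal (1 - fst (q (1, 1))) + ennreal (1 - snd (q (1, 1))))"
      by (intro mult_left_mono) auto
    then show ?thesis unfolding K_def by (simp add: distrib_left)
  qed
  have total: "ennreal F0 + Dn + Gt + Gt + tm = 1"
    using nn_integral_pistar[of "\<lambda>_. 1"] P.emeasure_space_1
    by (simp add: Dn_def Gt_def tm_def nn_integral_g01)
  have "(2::ennreal) = ennreal F0 * 2 + (Dn + Gt) + (Dn + Gt) + tm + (tm + Gt + Gt)"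
    using total by (metis (no_types, lifting) mult.commute mult_2 ring_distribs(1) ac_simps one_add_one mult.left_neutral)
  also have "\<dots> \<le> ennreal F0 * 2 + (A H1 + R ?t1 + R ?q2) + (A H2 + U ?t2 + U ?q1) + (K ?q1 + K ?q2) + (tm + Gt + Gt)"
    by (rule add_mono[OF add_mono[OF add_mono[OF add_mono[OF order_refl col1] col2] corner] order_refl])
  also have "\<dots> = ennreal F0 * 2 + (A H1 + A H2) + R ?t1 + U ?t2 + (R ?q2 + K ?q2) + (U ?q1 + K ?q1) + (tm + Gt + Gt)"
    by (simp add: ac_simps)
  also have "\<dots> \<le> ennreal F0 * 2 + (A H1 + A H2) + R ?t1 + U ?t2 + (R ?t2 + K ?t2) + (U ?t1 + K ?t1) + (tm + Gt + Gt)"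
    by (rule add_mono[OF add_mono[OF add_mono[OF order_refl edgeR] edgeU] order_refl])
  also have "\<dots> = ennreal F0 * 2 + (A H1 + A H2) + (R ?t1 + R ?t2) + (U ?t1 + U ?t2) + (K ?t1 + K ?t2) + (tm + Gt + Gt)"
    by (simp add: ac_simps)
  also have "\<dots> \<le> (\<integral>\<^sup>+ v. ennreal (2 - (fst (t v) + snd (t v))) \<partial>pistar F f) + (tm + Gt + Gt)"
  proof (rule add_right_mono)
    have "fst (t (x, y)) \<le> H1 (x, y) \<and> snd (t (x, y)) \<le> H2 (x, y) \<and> H1 (x, y) \<le> 1 \<and> H2 (x, y) \<le> 1"
      if "x \<in> {0..1}" "y \<in> {0..1}" for x y
      using H1[OF that] H2[OF that] by simp
    then show "ennreal F0 * 2 + (A H1 + A H2) + (R ?t1 + R ?t2) + (U ?t1 + U ?t2) + (K ?t1 + K ?t2)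
        \<le> (\<integral>\<^sup>+ v. ennreal (2 - (fst (t v) + snd (t v))) \<partial>pistar F f)"
      unfolding A_def R_def U_def K_def tm_def
      by (rule nn_integral_pistar_slack_ge[OF mech Tm \<open>H1 \<in> borel_measurable borel\<close> \<open>H2 \<in> borel_measurable borel\<close>])
  qed
  also have "tm + Gt + Gt = ennreal (F1 + mom2 1)"
    using top_mass_nonneg mom2_nonneg[of 1] by (simp add: tm_def Gt_def F1_eq flip: ennreal_plus)
  finally show ?thesis .
qed

lemma revenue_pistar_le:
  assumes mech: "DSIC_EPIR_mechanism q t"
  shows "revenue t (pistar F f) \<le> F1 + mom2 1"
proof (cases "integrable (pistar F f) (\<lambda>v. fst (t v) + snd (t v))")
  case False
  then show ?thesis
    using mom2_nonneg[of 1] by (simp add: revenue_def not_integrable_integral_eq)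
next
  case True
  interpret P: prob_space "pistar F f"
    using pistar_in_PiF by (simp add: PiF_def)
  define T where "T v = fst (t v) + snd (t v)" for v
  have int: "integrable (pistar F f) T" using True by (simp add: T_def[abs_def])
  have Tm: "(\<lambda>v. fst (t v) + snd (t v)) \<in> borel_measurable borel"
    using borel_measurable_integrable[OF True] by (simp cong: measurable_cong_sets)
  have "AE v in pistar F f. fst v \<in> {0..1} \<and> snd v \<in> {0..1}"
  proof -
    have "fst -` (- {0..1}) \<in> null_sets (pistar F f)" "snd -` (- {0..1}) \<in> null_sets (pistar F f)"
      using emeasure_pistar_vimage[of "- {0..1}"] F_supp1
        measurable_sets[OF measurable_Pair_real(3), of "- {0..1}"]
        measurable_sets[OF measurable_Pair_real(4), of "- {0..1}"]
      by (auto simp: null_sets_def)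
    then have "AE v in pistar F f. fst v \<in> {0..1}" "AE v in pistar F f. snd v \<in> {0..1}"
      by (auto intro: AE_I')
    then show ?thesis by (simp add: eventually_conj_iff)
  qed
  then have nonneg: "AE v in pistar F f. 0 \<le> 2 - T v"
  proof eventually_elim
    case (elim v)
    then show ?case
      using ic_ir_schedule_payment_le(2)[OF DSIC_EPIR_mechanism_ic_ir_schedule(1)[OF mech], of "snd v" "fst v"]
        ic_ir_schedule_payment_le(2)[OF DSIC_EPIR_mechanism_ic_ir_schedule(2)[OF mech], of "fst v" "snd v"]
      by (simp add: T_def)
  qed
  have "(\<integral>\<^sup>+ v. ennreal (2 - T v) \<partial>pistar F f) = ennreal (\<integral>v. 2 - T v \<partial>pistar F f)"
    using int nonneg by (intro nn_integral_eq_integral) auto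
  also have "(\<integral>v. 2 - T v \<partial>pistar F f) = 2 - revenue t (pistar F f)"
    using int by (simp add: revenue_def T_def[abs_def] P.prob_space)
  finally have "2 \<le> ennreal (2 - revenue t (pistar F f)) + ennreal (F1 + mom2 1)"
    using pistar_slack_bound[OF mech Tm] by (simp add: T_def)
  moreover have "0 \<le> 2 - revenue t (pistar F f)"
    using integral_nonneg_AE[OF nonneg] int by (simp add: revenue_def T_def[abs_def] P.prob_space)
  moreover have "0 \<le> F1 + mom2 1" using mom2_nonneg[of 1] by simp
  ultimately show ?thesis by (simp flip: ennreal_plus)
qed

end

theorem theorem1:
  fixes F :: "real measure" and f :: "real \<Rightarrow> real"
  assumes F_prob: "prob_space F"
    and F_sets: "sets F = sets borel"
    and F_supp1: "emeasure F (- {0..1}) = 0"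
    and F_supp2: "\<forall>x\<in>{0..1}. \<forall>e>0. emeasure F (ball x e) > 0"
    and f_meas: "set_borel_measurable lborel {0<..<1} f"
    and f_nonneg: "\<forall>x\<in>{0<..<1}. 0 \<le> f x"
    and F_dens: "\<forall>A\<in>sets borel.
         emeasure F (A \<inter> {0<..<1}) = (\<integral>\<^sup>+ x\<in>A \<inter> {0<..<1}. ennreal (f x) \<partial>lborel)"
    and reg1: "mono_on {0<..<1} (\<lambda>x. x^2 * f x)"
    and reg2: "measure F {1} \<ge> (LINT x:{0<..<1}|lborel. x^2 * f x)"
  shows "pistar F f \<in> PiF F
    \<and> DSIC_EPIR_mechanism qstar tstar
    \<and> (\<forall>\<pi>\<in>PiF F. revenue tstar \<pi> \<ge> revenue tstar (pistar F f))
    \<and> (\<forall>q t. DSIC_EPIR_mechanism q t \<longrightarrow> revenue tstar (pistar F f) \<ge> revenue t (pistar F f))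
    \<and> (INF \<pi>\<in>PiF F. revenue tstar \<pi>) = (\<integral>x. x^2 \<partial>F)"
proof -
  interpret regular_prior F f
    by (rule regular_prior.intro[OF F_prob F_sets F_supp1 f_meas f_nonneg F_dens reg1 reg2])
  have rev: "revenue tstar \<pi> = (\<integral>x. x^2 \<partial>F)" if "\<pi> \<in> PiF F" for \<pi>
    using revenue_tstar[OF F_sets F_supp1 that] .
  have "revenue t (pistar F f) \<le> revenue tstar (pistar F f)" if "DSIC_EPIR_mechanism q t" for q t
    using revenue_pistar_le[OF that] rev[OF pistar_in_PiF] second_moment_F by simp
  moreover have "(INF \<pi>\<in>PiF F. revenue tstar \<pi>) = (INF \<pi>\<in>PiF F. \<integral>x. x^2 \<partial>F)"
    by (rule INF_cong) (simp_all add: rev)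
  moreover have "\<dots> = (\<integral>x. x^2 \<partial>F)"
    using pistar_in_PiF by (intro cINF_const) auto
  ultimately show ?thesis
    using pistar_in_PiF DSIC_EPIR_mechanism_qstar_tstar rev by auto
qed

end
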